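(* Let $B$ and each $A^u$ ($u\in V(B)$) be cubic 3-connected graphs, $a^u\in V(A^u)$, and $G=B\{(A^u,a^u):u\in V(B)\}$. Suppose $v(A^u)\equiv 2\pmod 6$ for every $u$ and each $(A^u,a^u)$ satisfies: (h1) for every vertex $y$ of $A^u-(N^u\cup\{a^u\})$ adjacent to a vertex of $N^u$, $A^u-(N^u\cup\{a^u,y\})$ has no $\Lambda$-factor; (h2) for every edge $a^uz\in E(A^u)$, $A^u-\{a^u,z\}$ has a $\Lambda$-factor; (h3) for every 5-vertex path $W$ in $A^u$ with center vertex $a^u$, $A^u-W$ has a $\Lambda$-factor. Then: ($\gamma$3) every $\Lambda$-factor $Q$ of $G$ lies in $\Gamma(G,P)$ for exactly one $\Lambda$-factor $P$ of $B$ (in particular $\Gamma(G,P)\cap\Gamma(G,P')=\emptyset$ for distinct $P,P'\in\Gamma(B)$, and $\Gamma(G)=\bigcup_{P\in\Gamma(B)}\Gamma(G,P)$); ($\gamma$2) for every $\Lambda$-factor $P$ of $B$, the map sending $Q\in\Gamma(G,P)$ to the family $(Q_u)_{u\in V(B)}$, where $Q_u$ is the union of the components of $Q$ contained in $H_u(P)$, is a bijection from $\Gamma(G,P)$ onto $\prod_{u\in V(B)}\Gamma(H_u(P))$; and consequently $G$ has a $\Lambda$-factor if and only if $B$ has a $\Lambda$-factor.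
   Context: Graphs are finite and simple. A $\Lambda$-factor of a graph is a spanning subgraph each of whose components is a 3-vertex path; $\Gamma(H)$ is the set of $\Lambda$-factors of $H$; for a subgraph $W$, $H-W$ deletes the vertices of $W$. Graph-composition $G=B\{(A^u,a^u):u\in V(B)\}$: $B$ cubic, each $a^u$ of degree 3 in $A^u$, $N^u=N(a^u,A^u)$, $A_u=A^u-a^u$; fix for each $u$ a bijection between $N^u$ and the edges of $B$ at $u$; $G$ is the disjoint union of all $A_u$ plus, for each $uv\in E(B)$, an edge $\alpha(uv)$ joining the neighbour of $a^u$ corresponding to $uv$ with the neighbour of $a^v$ corresponding to $uv$; $E'(G)=\{\alpha(e):e\in E(B)\}$. For a $\Lambda$-factor $P$ of $B$, $\Gamma(G,P)$ is the set of $\Lambda$-factors $Q$ of $G$ with $\alpha^{-1}(E'(G)\cap E(Q))=E(P)$. For each path $uvw$ of $P$ (center $v$): for the end-vertex $u$, $H_u(P)=A_u-x_u$ where $x_u$ is the end of $\alpha(uv)$ in $A_u$ (similarly for $w$); for the center $v$, $H_v(P)$ is the graph obtained from $A_v$ by adding the edges $\alpha(uv)$ and $\alpha(vw)$ together with their end-vertices. *)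

theory Defs
  imports Main "HOL-Library.FuncSet"
begin

text \<open>A graph is a pair (vertex set, edge set); edges are 2-element vertex sets.\<close>
type_synonym 'a graph = "'a set \<times> 'a set set"

definition verts :: "'a graph \<Rightarrow> 'a set" where "verts G = fst G"
definition edges :: "'a graph \<Rightarrow> 'a set set" where "edges G = snd G"

definition simple_graph :: "'a graph \<Rightarrow> bool" where
  "simple_graph G \<longleftrightarrow> finite (verts G) \<and>
     (\<forall>e\<in>edges G. \<exists>x y. x \<noteq> y \<and> x \<in> verts G \<and> y \<in> verts G \<and> e = {x, y})"

definition adj :: "'a graph \<Rightarrow> 'a \<Rightarrow> 'a \<Rightarrow> bool" where
  "adj G x y \<longleftrightarrow> {x, y} \<in> edges G"

definition nbrs :: "'a graph \<Rightarrow> 'a \<Rightarrow> 'a set" where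
  "nbrs G x = {y. adj G x y}"

definition degree :: "'a graph \<Rightarrow> 'a \<Rightarrow> nat" where
  "degree G x = card (nbrs G x)"

definition cubic :: "'a graph \<Rightarrow> bool" where
  "cubic G \<longleftrightarrow> simple_graph G \<and> (\<forall>x\<in>verts G. degree G x = 3)"

definition del_verts :: "'a graph \<Rightarrow> 'a set \<Rightarrow> 'a graph" where
  "del_verts G S = (verts G - S, {e \<in> edges G. e \<inter> S = {}})"

definition reach :: "'a graph \<Rightarrow> 'a \<Rightarrow> 'a \<Rightarrow> bool" where
  "reach G x y \<longleftrightarrow> (x, y) \<in> ({(u, v). u \<in> verts G \<and> v \<in> verts G \<and> adj G u v})\<^sup>*"

definition connected :: "'a graph \<Rightarrow> bool" where
  "connected G \<longleftrightarrow> verts G \<noteq> {} \<and> (\<forall>x\<in>verts G. \<forall>y\<in>verts G. reach G x y)"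

definition k_connected :: "nat \<Rightarrow> 'a graph \<Rightarrow> bool" where
  "k_connected k G \<longleftrightarrow> card (verts G) > k \<and>
     (\<forall>S \<subseteq> verts G. card S < k \<longrightarrow> connected (del_verts G S))"

definition component :: "'a graph \<Rightarrow> 'a \<Rightarrow> 'a set" where
  "component G x = {y \<in> verts G. reach G x y}"

definition components :: "'a graph \<Rightarrow> 'a set set" where
  "components G = component G ` verts G"

text \<open>A spanning subgraph of H is identified with its edge set F (vertex set verts H).
  F is a Lambda-factor iff each component of (verts H, F) is a 3-vertex path.\<close>
definition is_P3 :: "'a set \<Rightarrow> 'a set set \<Rightarrow> bool" where
  "is_P3 C F \<longleftrightarrow> (\<exists>x y z. distinct [x, y, z] \<and> C = {x, y, z} \<and> F = {{x, y}, {y, z}})"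

definition lambda_factor :: "'a graph \<Rightarrow> 'a set set \<Rightarrow> bool" where
  "lambda_factor H F \<longleftrightarrow> F \<subseteq> edges H \<and>
     (\<forall>C\<in>components (verts H, F). is_P3 C {e \<in> F. e \<subseteq> C})"

definition Gamma :: "'a graph \<Rightarrow> 'a set set set" where
  "Gamma H = {F. lambda_factor H F}"

text \<open>Data: cubic graph B, graphs A u with distinguished vertex a u, and for each u a
  bijection phi u from the edges of B at u onto N^u = nbrs (A u) (a u).\<close>

definition inc_edges :: "'b graph \<Rightarrow> 'b \<Rightarrow> 'b set set" where
  "inc_edges B u = {e \<in> edges B. u \<in> e}"

definition lift_edges :: "'b \<Rightarrow> 'a set set \<Rightarrow> ('b \<times> 'a) set set" where
  "lift_edges u E = (\<lambda>e. Pair u ` e) ` E"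

text \<open>The edge alpha(e) of G corresponding to the edge e = {u,v} of B.\<close>
definition alpha :: "('b \<Rightarrow> 'b set \<Rightarrow> 'a) \<Rightarrow> 'b set \<Rightarrow> ('b \<times> 'a) set" where
  "alpha phi e = (\<lambda>u. (u, phi u e)) ` e"

definition compose :: "'b graph \<Rightarrow> ('b \<Rightarrow> 'a graph) \<Rightarrow> ('b \<Rightarrow> 'a) \<Rightarrow> ('b \<Rightarrow> 'b set \<Rightarrow> 'a)
    \<Rightarrow> ('b \<times> 'a) graph" where
  "compose B A a phi =
     ((\<Union>u\<in>verts B. {u} \<times> (verts (A u) - {a u})),
      (\<Union>u\<in>verts B. lift_edges u (edges (del_verts (A u) {a u}))) \<union> alpha phi ` edges B)"

definition composition_data :: "'b graph \<Rightarrow> ('b \<Rightarrow> 'a graph) \<Rightarrow> ('b \<Rightarrow> 'a) \<Rightarrow> ('b \<Rightarrow> 'b set \<Rightarrow> 'a)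
    \<Rightarrow> bool" where
  "composition_data B A a phi \<longleftrightarrow> cubic B \<and>
     (\<forall>u\<in>verts B. simple_graph (A u) \<and> a u \<in> verts (A u) \<and> degree (A u) (a u) = 3 \<and>
        bij_betw (phi u) (inc_edges B u) (nbrs (A u) (a u)))"

text \<open>Gamma(G,P): Lambda-factors Q of G with alpha^{-1}(E'(G) \<inter> E(Q)) = E(P).\<close>
definition GammaGP :: "'b graph \<Rightarrow> ('b \<Rightarrow> 'a graph) \<Rightarrow> ('b \<Rightarrow> 'a) \<Rightarrow> ('b \<Rightarrow> 'b set \<Rightarrow> 'a)
    \<Rightarrow> 'b set set \<Rightarrow> ('b \<times> 'a) set set set" where
  "GammaGP B A a phi P =
     {Q. lambda_factor (compose B A a phi) Q \<and> {e \<in> edges B. alpha phi e \<in> Q} = P}"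

definition Hgraph :: "'b graph \<Rightarrow> ('b \<Rightarrow> 'a graph) \<Rightarrow> ('b \<Rightarrow> 'a) \<Rightarrow> ('b \<Rightarrow> 'b set \<Rightarrow> 'a)
    \<Rightarrow> 'b set set \<Rightarrow> 'b \<Rightarrow> ('b \<times> 'a) graph" where
  "Hgraph B A a phi P u =
     (let Pu = {e \<in> P. u \<in> e};
          Au = del_verts (A u) {a u} in
      if card Pu = 2 then
        ({u} \<times> verts Au \<union> \<Union>(alpha phi ` Pu),
         lift_edges u (edges Au) \<union> alpha phi ` Pu)
      else
        (let x = phi u (THE e. e \<in> Pu); Au' = del_verts Au {x} in
         ({u} \<times> verts Au', lift_edges u (edges Au'))))"

definition restrict_factor :: "('c graph) \<Rightarrow> 'c set set \<Rightarrow> 'c graph \<Rightarrow> 'c set set" where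
  "restrict_factor G Q H =
     {f \<in> Q. \<exists>C\<in>components (verts G, Q). C \<subseteq> verts H \<and> {e \<in> Q. e \<subseteq> C} \<subseteq> edges H \<and> f \<subseteq> C}"

end

theory Submission
  imports Defs
begin

(* The development rests on a local description of Lambda-factors: F is a Lambda-factor of a
   simple graph H iff F is a set of edges of H and every vertex lies in a "block" of F, i.e. a
   3-set C on which F induces a 3-vertex path and which no edge of F leaves.  Blocks are exactly
   the components of (V(H), F), and this description is stable under restriction, disjoint
   gluing and injective relabelling, which is all the later constructions need.

   (gamma3) For a Lambda-factor Q of G let P_Q be the set of edges e of B with alpha(e) in Q.
   In the fibre {u} x (V(A^u) - a^u), whose size is 1 mod 3, the components of Q through
   alpha-edges are counted against the remaining components (of size 3).  This leaves three
   patterns for the P_Q-edges at u, and the pattern with three P_Q-edges is ruled out by (h1).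
   Hence every vertex of B meets one or two P_Q-edges, alternately, so P_Q is a Lambda-factor.

   (gamma2) For P in Gamma(B) an "owner" map assigns every vertex of G to a vertex of B; its
   fibres are the vertex sets of the graphs H_u(P).  Every component of Q in Gamma(G,P) lies in
   one fibre, so Q splits into Lambda-factors of the H_u(P); conversely Lambda-factors of the
   H_u(P) glue to an element of Gamma(G,P).

   Existence: each H_u(P) has a Lambda-factor, by (h2) at end vertices of P and by (h3) at
   centres; the 5-vertex path needed for (h3) is found using 3-connectivity of A^u and
   |V(A^u)| >= 8.  Gluing these factors shows that Gamma(B) non-empty implies Gamma(G)
   non-empty. *)

section \<open>Lambda-factors described by blocks\<close>

lemma verts_pair [simp]: "verts (V, E) = V" and edges_pair [simp]: "edges (V, E) = E"
  by (simp_all add: verts_def edges_def)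

lemma verts_del [simp]: "verts (del_verts H S) = verts H - S"
  by (simp add: del_verts_def verts_def)

lemma edges_del [simp]: "edges (del_verts H S) = {e \<in> edges H. e \<inter> S = {}}"
  by (simp add: del_verts_def edges_def)

definition lambda_block :: "'c set \<Rightarrow> 'c set set \<Rightarrow> 'c set \<Rightarrow> bool" where
  "lambda_block V F C \<longleftrightarrow> C \<subseteq> V \<and> is_P3 C {e \<in> F. e \<subseteq> C} \<and> (\<forall>f\<in>F. f \<inter> C \<noteq> {} \<longrightarrow> f \<subseteq> C)"

definition lambda_cover :: "'c set \<Rightarrow> 'c set set \<Rightarrow> bool" where
  "lambda_cover V F \<longleftrightarrow> (\<forall>x\<in>V. \<exists>C. x \<in> C \<and> lambda_block V F C)"

definition simple_edges :: "'c set \<Rightarrow> 'c set set \<Rightarrow> bool" where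
  "simple_edges V E \<longleftrightarrow> (\<forall>e\<in>E. \<exists>x y. x \<noteq> y \<and> x \<in> V \<and> y \<in> V \<and> e = {x, y})"

lemma simple_edgesD:
  "simple_edges V E \<Longrightarrow> e \<in> E \<Longrightarrow> \<exists>x y. x \<noteq> y \<and> x \<in> V \<and> y \<in> V \<and> e = {x, y}"
  unfolding simple_edges_def by blast

lemma simple_edges_other_end:
  assumes "simple_edges V E" "e \<in> E" "u \<in> e"
  shows "\<exists>v. v \<noteq> u \<and> v \<in> V \<and> u \<in> V \<and> e = {u, v}"
  using simple_edgesD[OF assms(1,2)] assms(3) by (auto simp: insert_commute)

lemma simple_graph_edges: "simple_graph H \<Longrightarrow> simple_edges (verts H) (edges H)"
  unfolding simple_graph_def simple_edges_def by blast

lemma simple_edges_del: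
  "simple_graph H \<Longrightarrow> simple_edges (verts (del_verts H S)) (edges (del_verts H S))"
  unfolding simple_graph_def simple_edges_def by fastforce

lemma lambda_blockD:
  assumes "lambda_block V F C"
  shows "C \<subseteq> V" "is_P3 C {e \<in> F. e \<subseteq> C}" "\<And>f. f \<in> F \<Longrightarrow> f \<inter> C \<noteq> {} \<Longrightarrow> f \<subseteq> C"
  using assms unfolding lambda_block_def by auto

lemma reach_pair: "reach (V, F) x y \<longleftrightarrow> (x, y) \<in> {(u, v). u \<in> V \<and> v \<in> V \<and> {u, v} \<in> F}\<^sup>*"
  by (simp add: reach_def adj_def)

lemma reach_closed:
  assumes "reach G x y" "x \<in> T" "\<And>u v. u \<in> T \<Longrightarrow> v \<in> verts G \<Longrightarrow> adj G u v \<Longrightarrow> v \<in> T"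
  shows "y \<in> T"
proof -
  have "(x, y) \<in> {(u, v). u \<in> verts G \<and> v \<in> verts G \<and> adj G u v}\<^sup>*"
    using assms(1) by (simp add: reach_def)
  then show ?thesis
    by (induction rule: rtrancl_induct) (use assms in auto)
qed

lemma P3_edges:
  assumes "is_P3 C E"
  shows "\<exists>x y z. distinct [x, y, z] \<and> C = {x, y, z} \<and> E = {{x, y}, {y, z}}"
  using assms unfolding is_P3_def by blast

lemma P3_card: "is_P3 C E \<Longrightarrow> card C = 3 \<and> finite C"
  unfolding is_P3_def by (elim exE conjE) simp

lemma P3_crossing_edge:
  assumes "is_P3 C E" "x \<in> C" "x \<in> W" "\<not> C \<subseteq> W"
  shows "\<exists>f\<in>E. f \<inter> W \<noteq> {} \<and> \<not> f \<subseteq> W"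
proof -
  obtain p q r where "distinct [p, q, r]" "C = {p, q, r}" "E = {{p, q}, {q, r}}"
    using P3_edges[OF assms(1)] by blast
  then show ?thesis using assms(2-4) by (cases "q \<in> W") auto
qed

lemma P3_covers:
  assumes "is_P3 C E" "x \<in> C"
  shows "\<exists>f\<in>E. x \<in> f"
proof -
  obtain p q r where "C = {p, q, r}" "E = {{p, q}, {q, r}}"
    using P3_edges[OF assms(1)] by blast
  then show ?thesis using assms(2) by auto
qed

lemma P3_first_edge:
  assumes "is_P3 C E" "f \<in> E"
  shows "\<exists>p q r. distinct [p, q, r] \<and> C = {p, q, r} \<and> E = {{p, q}, {q, r}} \<and> f = {p, q}"
proof -
  obtain x y z where d: "distinct [x, y, z]" "C = {x, y, z}" "E = {{x, y}, {y, z}}"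
    using P3_edges[OF assms(1)] by blast
  show ?thesis
  proof (cases "f = {x, y}")
    case True then show ?thesis using d by blast
  next
    case False
    then have "f = {z, y}" using d assms(2) by (auto simp: insert_commute)
    moreover have "E = {{z, y}, {y, x}}" "C = {z, y, x}" "distinct [z, y, x]"
      using d by (auto simp: insert_commute)
    ultimately show ?thesis by blast
  qed
qed

lemma lambda_block_reach:
  assumes c: "lambda_block V F C" and x: "x \<in> C" and r: "reach (V, F) x y"
  shows "y \<in> C"
  using r x by (rule reach_closed) (use lambda_blockD(3)[OF c] in \<open>auto simp: adj_def\<close>)

lemma lambda_block_component:
  assumes c: "lambda_block V F C" and x: "x \<in> C"
  shows "component (V, F) x = C"
proof
  show "component (V, F) x \<subseteq> C"
    using lambda_block_reach[OF c x] unfolding component_def by blast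
next
  have CV: "C \<subseteq> V" using lambda_blockD(1)[OF c] .
  obtain p q r where d: "distinct [p, q, r]" "C = {p, q, r}" "{e \<in> F. e \<subseteq> C} = {{p, q}, {q, r}}"
    using P3_edges[OF lambda_blockD(2)[OF c]] by blast
  then have pq: "{p, q} \<in> F" "{q, r} \<in> F" by auto
  let ?R = "{(u, v). u \<in> V \<and> v \<in> V \<and> {u, v} \<in> F}"
  have "(p, q) \<in> ?R\<^sup>*" "(q, p) \<in> ?R\<^sup>*" "(q, r) \<in> ?R\<^sup>*" "(r, q) \<in> ?R\<^sup>*"
    using pq d(2) CV by (auto intro!: r_into_rtrancl simp: insert_commute)
  then have "\<And>s t. s \<in> C \<Longrightarrow> t \<in> C \<Longrightarrow> (s, t) \<in> ?R\<^sup>*"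
    using d(2) by (auto intro: rtrancl_trans)
  then show "C \<subseteq> component (V, F) x"
    using x CV by (auto simp: component_def reach_pair)
qed

lemma component_closed_under_edges:
  assumes s: "simple_edges V F" and x: "x \<in> V" and f: "f \<in> F" "f \<inter> component (V, F) x \<noteq> {}"
  shows "f \<subseteq> component (V, F) x"
proof -
  let ?R = "{(u, v). u \<in> V \<and> v \<in> V \<and> {u, v} \<in> F}"
  obtain p q where pq: "p \<in> V" "q \<in> V" "f = {p, q}"
    using simple_edgesD[OF s f(1)] by blast
  then have R: "(p, q) \<in> ?R" "(q, p) \<in> ?R" using f(1) by (auto simp: insert_commute)
  have "(x, p) \<in> ?R\<^sup>* \<or> (x, q) \<in> ?R\<^sup>*"
    using f(2) pq(3) by (auto simp: component_def reach_pair)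
  then have "(x, p) \<in> ?R\<^sup>* \<and> (x, q) \<in> ?R\<^sup>*"
    using R by (blast intro: rtrancl_into_rtrancl)
  then show ?thesis using pq by (auto simp: component_def reach_pair)
qed

lemma lambda_factor_iff_cover:
  assumes s: "simple_edges (verts H) (edges H)"
  shows "lambda_factor H F \<longleftrightarrow> F \<subseteq> edges H \<and> lambda_cover (verts H) F"
proof
  assume lf: "lambda_factor H F"
  then have FE: "F \<subseteq> edges H" by (simp add: lambda_factor_def)
  have sF: "simple_edges (verts H) F" using s FE unfolding simple_edges_def by blast
  have "lambda_block (verts H) F (component (verts H, F) x)" if x: "x \<in> verts H" for x
    unfolding lambda_block_def
  proof (intro conjI ballI impI)
    show "component (verts H, F) x \<subseteq> verts H" by (auto simp: component_def)
    show "is_P3 (component (verts H, F) x) {e \<in> F. e \<subseteq> component (verts H, F) x}"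
      using lf x by (auto simp: lambda_factor_def components_def)
    show "f \<subseteq> component (verts H, F) x" if "f \<in> F" "f \<inter> component (verts H, F) x \<noteq> {}" for f
      using component_closed_under_edges[OF sF x that] .
  qed
  moreover have "x \<in> component (verts H, F) x" if "x \<in> verts H" for x
    using that by (simp add: component_def reach_def)
  ultimately show "F \<subseteq> edges H \<and> lambda_cover (verts H) F"
    using FE unfolding lambda_cover_def by blast
next
  assume cov: "F \<subseteq> edges H \<and> lambda_cover (verts H) F"
  show "lambda_factor H F"
    unfolding lambda_factor_def
  proof (intro conjI ballI)
    fix C assume "C \<in> components (verts H, F)"
    then obtain y where y: "y \<in> verts H" "C = component (verts H, F) y"
      by (auto simp: components_def)
    obtain C' where C': "y \<in> C'" "lambda_block (verts H) F C'"
      using cov y(1) by (auto simp: lambda_cover_def)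
    have "C = C'" using lambda_block_component[OF C'(2) C'(1)] y(2) by simp
    then show "is_P3 C {e \<in> F. e \<subseteq> C}" using lambda_blockD(2)[OF C'(2)] by simp
  qed (use cov in simp)
qed

lemma lambda_cover_restrict:
  assumes "\<And>x. x \<in> W \<Longrightarrow> \<exists>C. x \<in> C \<and> C \<subseteq> W \<and> lambda_block V F C"
  shows "lambda_cover W {f \<in> F. f \<subseteq> W}"
  unfolding lambda_cover_def
proof
  fix x assume "x \<in> W"
  then obtain C where C: "x \<in> C" "C \<subseteq> W" "lambda_block V F C" using assms by blast
  have "{e \<in> {f \<in> F. f \<subseteq> W}. e \<subseteq> C} = {e \<in> F. e \<subseteq> C}" using C(2) by auto
  then show "\<exists>C. x \<in> C \<and> lambda_block W {f \<in> F. f \<subseteq> W} C"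
    using C unfolding lambda_block_def by (intro exI[of _ C]) auto
qed

lemma lambda_cover_UN:
  assumes disj: "\<And>i j. i \<in> I \<Longrightarrow> j \<in> I \<Longrightarrow> i \<noteq> j \<Longrightarrow> Vs i \<inter> Vs j = {}"
    and sub: "\<And>i f. i \<in> I \<Longrightarrow> f \<in> Fs i \<Longrightarrow> f \<subseteq> Vs i \<and> f \<noteq> {}"
    and cov: "\<And>i. i \<in> I \<Longrightarrow> lambda_cover (Vs i) (Fs i)"
  shows "lambda_cover (\<Union>i\<in>I. Vs i) (\<Union>i\<in>I. Fs i)"
  unfolding lambda_cover_def
proof
  fix x assume "x \<in> (\<Union>i\<in>I. Vs i)"
  then obtain i where i: "i \<in> I" "x \<in> Vs i" by auto
  then obtain C where C: "x \<in> C" "lambda_block (Vs i) (Fs i) C"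
    using cov unfolding lambda_cover_def by blast
  have CV: "C \<subseteq> Vs i" using lambda_blockD(1)[OF C(2)] .
  have own: "j = i" if "j \<in> I" "f \<in> Fs j" "f \<inter> C \<noteq> {}" for j f
    using disj[OF that(1) i(1)] sub[OF that(1,2)] CV that(3) by blast
  have "e \<in> Fs i" if "j \<in> I" "e \<in> Fs j" "e \<subseteq> C" for j e
  proof -
    have "e \<inter> C \<noteq> {}" using sub[OF that(1,2)] that(3) by blast
    then show ?thesis using own[OF that(1,2)] that(2) by simp
  qed
  then have "{e \<in> (\<Union>i\<in>I. Fs i). e \<subseteq> C} = {e \<in> Fs i. e \<subseteq> C}"
    using i(1) by blast
  moreover have "f \<subseteq> C" if "f \<in> (\<Union>i\<in>I. Fs i)" "f \<inter> C \<noteq> {}" for f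
    using that own lambda_blockD(3)[OF C(2)] by blast
  ultimately show "\<exists>C. x \<in> C \<and> lambda_block (\<Union>i\<in>I. Vs i) (\<Union>i\<in>I. Fs i) C"
    using C CV i unfolding lambda_block_def by (intro exI[of _ C]) auto
qed

lemma lambda_cover_Un:
  assumes "lambda_cover V1 F1" "lambda_cover V2 F2" "V1 \<inter> V2 = {}"
    and "\<And>f. f \<in> F1 \<Longrightarrow> f \<subseteq> V1 \<and> f \<noteq> {}" "\<And>f. f \<in> F2 \<Longrightarrow> f \<subseteq> V2 \<and> f \<noteq> {}"
  shows "lambda_cover (V1 \<union> V2) (F1 \<union> F2)"
proof -
  let ?V = "\<lambda>b. if b then V1 else V2" and ?F = "\<lambda>b. if b then F1 else F2"
  have "lambda_cover (\<Union>b\<in>UNIV. ?V b) (\<Union>b\<in>UNIV. ?F b)"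
    by (rule lambda_cover_UN) (use assms in \<open>auto split: if_splits\<close>)
  moreover have "(\<Union>b\<in>UNIV. ?V b) = V1 \<union> V2" "(\<Union>b\<in>UNIV. ?F b) = F1 \<union> F2"
    by (auto simp: UNIV_bool)
  ultimately show ?thesis by simp
qed

lemma lambda_cover_path:
  assumes "distinct [p, q, r]"
  shows "lambda_cover {p, q, r} {{p, q}, {q, r}}"
proof -
  have "{e \<in> {{p, q}, {q, r}}. e \<subseteq> {p, q, r}} = {{p, q}, {q, r}}" by auto
  then have "lambda_block {p, q, r} {{p, q}, {q, r}} {p, q, r}"
    using assms unfolding lambda_block_def is_P3_def by auto
  then show ?thesis unfolding lambda_cover_def by (intro ballI exI[of _ "{p, q, r}"]) simp
qed

lemma lambda_cover_image:
  assumes inj: "inj_on g U" and VU: "V \<subseteq> U" and FU: "\<And>f. f \<in> F \<Longrightarrow> f \<subseteq> U"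
    and cov: "lambda_cover V F"
  shows "lambda_cover (g ` V) ((`) g ` F)"
  unfolding lambda_cover_def
proof
  fix y assume "y \<in> g ` V"
  then obtain x where x: "x \<in> V" "y = g x" by auto
  then obtain C where C: "x \<in> C" "lambda_block V F C" using cov unfolding lambda_cover_def by blast
  have CU: "C \<subseteq> U" using lambda_blockD(1)[OF C(2)] VU by auto
  obtain p q r where d: "distinct [p, q, r]" "C = {p, q, r}" "{e \<in> F. e \<subseteq> C} = {{p, q}, {q, r}}"
    using P3_edges[OF lambda_blockD(2)[OF C(2)]] by blast
  have sub_iff: "g ` f \<subseteq> g ` C \<longleftrightarrow> f \<subseteq> C" and meet_iff: "g ` f \<inter> g ` C = g ` (f \<inter> C)"
    if "f \<in> F" for f
    using inj_on_image_mem_iff[OF inj _ CU] inj_on_image_Int[OF inj _ CU] FU[OF that] by blast+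
  have "{e \<in> (`) g ` F. e \<subseteq> g ` C} = (`) g ` {e \<in> F. e \<subseteq> C}"
    using sub_iff by auto
  moreover have "distinct [g p, g q, g r]"
    using d(1,2) CU inj_onD[OF inj] by auto
  ultimately have "is_P3 (g ` C) {e \<in> (`) g ` F. e \<subseteq> g ` C}"
    unfolding is_P3_def d(3) using d(2)
      by (intro exI[of _ "g p"] exI[of _ "g q"] exI[of _ "g r"]) auto
  moreover have "f' \<subseteq> g ` C" if f': "f' \<in> (`) g ` F" "f' \<inter> g ` C \<noteq> {}" for f'
  proof -
    obtain f where f: "f \<in> F" "f' = g ` f" using f'(1) by blast
    then have "f \<inter> C \<noteq> {}" using f'(2) meet_iff by auto
    then show ?thesis using lambda_blockD(3)[OF C(2) f(1)] f(2) by blast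
  qed
  ultimately show "\<exists>C. y \<in> C \<and> lambda_block (g ` V) ((`) g ` F) C"
    using C lambda_blockD(1)[OF C(2)] x unfolding lambda_block_def by (intro exI[of _ "g ` C"]) auto
qed

definition star :: "'c set set \<Rightarrow> 'c \<Rightarrow> 'c set set" where
  "star P u = {e \<in> P. u \<in> e}"

lemma star_mem: "e \<in> star P u \<longleftrightarrow> e \<in> P \<and> u \<in> e"
  by (simp add: star_def)

lemma card_doubleton_edges: "distinct [x, y, z] \<Longrightarrow> card {{x, y}, {y, z}} = 2"
  by (auto simp: doubleton_eq_iff)

lemma lambda_cover_path_through:
  assumes cov: "lambda_cover V P" and w: "w \<in> V"
  shows "\<exists>x y z. distinct [x, y, z] \<and> w \<in> {x, y, z} \<and> star P x = {{x, y}} \<and>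
           star P y = {{x, y}, {y, z}} \<and> star P z = {{y, z}}"
proof -
  obtain C where C: "w \<in> C" "lambda_block V P C" using cov w unfolding lambda_cover_def by blast
  obtain x y z where d: "distinct [x, y, z]" "C = {x, y, z}" "{e \<in> P. e \<subseteq> C} = {{x, y}, {y, z}}"
    using P3_edges[OF lambda_blockD(2)[OF C(2)]] by blast
  have xyz: "{x, y} \<in> P" "{y, z} \<in> P" using d(3) by auto
  have sub: "star P t \<subseteq> {{x, y}, {y, z}}" if t: "t \<in> C" for t
  proof
    fix f assume "f \<in> star P t"
    then have "f \<in> P" "f \<subseteq> C" using lambda_blockD(3)[OF C(2)] t by (auto simp: star_mem)
    then show "f \<in> {{x, y}, {y, z}}" using d(3) by blast
  qed
  have "x \<in> C" "y \<in> C" "z \<in> C" using d(2) by auto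
  then have sx: "star P x \<subseteq> {{x, y}, {y, z}}" and sy: "star P y \<subseteq> {{x, y}, {y, z}}"
    and sz: "star P z \<subseteq> {{x, y}, {y, z}}" using sub by blast+
  have "x \<notin> {y, z}" "z \<notin> {x, y}" using d(1) by auto
  then have "star P x = {{x, y}}" "star P z = {{y, z}}"
    using sx sz xyz unfolding star_def by blast+
  moreover have "star P y = {{x, y}, {y, z}}"
    using sy xyz unfolding star_def by blast
  ultimately show ?thesis using d C(1) by blast
qed

lemma lambda_cover_star_card:
  assumes "lambda_cover V P" "u \<in> V"
  shows "card (star P u) = 1 \<or> card (star P u) = 2"
proof -
  obtain x y z where k: "distinct [x, y, z]" "u \<in> {x, y, z}" "star P x = {{x, y}}"
      "star P y = {{x, y}, {y, z}}" "star P z = {{y, z}}"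
    using lambda_cover_path_through[OF assms] by (elim exE conjE) (rule that; assumption)
  then show ?thesis using card_doubleton_edges[OF k(1)] by auto
qed

lemma lambda_cover_star_alternate:
  assumes cov: "lambda_cover V P" and u: "u \<in> V" and e: "e \<in> P" "u \<in> e" "v \<in> e" "u \<noteq> v"
  shows "card (star P u) = 2 \<longleftrightarrow> card (star P v) = 1"
proof -
  obtain x y z where k: "distinct [x, y, z]" "u \<in> {x, y, z}" "star P x = {{x, y}}"
      "star P y = {{x, y}, {y, z}}" "star P z = {{y, z}}"
    using lambda_cover_path_through[OF cov u] by (elim exE conjE) (rule that; assumption)
  have "star P u \<subseteq> star P x \<union> star P y \<union> star P z" using k(2) by blast
  then have "star P u \<subseteq> {{x, y}, {y, z}}" unfolding k(3-5) by blast
  moreover have "e \<in> star P u" using e by (simp add: star_mem)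
  ultimately have "e \<in> {{x, y}, {y, z}}" by blast
  then have "(u = y \<and> (v = x \<or> v = z)) \<or> (v = y \<and> (u = x \<or> u = z))"
    using e(2-4) by auto
  then show ?thesis using k card_doubleton_edges[OF k(1)] by auto
qed

lemma centre_block:
  assumes s: "simple_edges V E" and PE: "P \<subseteq> E" and u: "u \<in> V" "card (star P u) = 2"
    and alt: "\<And>e v. e \<in> P \<Longrightarrow> u \<in> e \<Longrightarrow> v \<in> e \<Longrightarrow> u \<noteq> v \<Longrightarrow> card (star P v) = 1"
  shows "\<exists>C. lambda_block V P C \<and> (\<forall>e\<in>star P u. e \<subseteq> C)"
proof -
  obtain e1 e2 where e12: "e1 \<noteq> e2" "star P u = {e1, e2}" using u(2) by (meson card_2_iff)
  then have "e1 \<in> star P u" "e2 \<in> star P u" by blast+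
  then have ein: "e1 \<in> P" "u \<in> e1" "e2 \<in> P" "u \<in> e2" by (simp_all add: star_mem)
  obtain v1 where v1: "v1 \<noteq> u" "v1 \<in> V" "e1 = {u, v1}"
    using simple_edges_other_end[OF s] ein PE by blast
  obtain v2 where v2: "v2 \<noteq> u" "v2 \<in> V" "e2 = {u, v2}"
    using simple_edges_other_end[OF s] ein PE by blast
  have "card (star P v1) = 1" "card (star P v2) = 1" using alt ein v1 v2 by auto
  moreover have "e1 \<in> star P v1" "e2 \<in> star P v2" using ein v1 v2 by (auto simp: star_mem)
  ultimately have ends: "star P v1 = {e1}" "star P v2 = {e2}"
    by (metis card_1_singletonE singletonD)+
  let ?C = "{v1, u, v2}"
  have meet: "f = e1 \<or> f = e2" if "f \<in> P" "f \<inter> ?C \<noteq> {}" for f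
  proof -
    have "f \<in> star P v1 \<or> f \<in> star P u \<or> f \<in> star P v2" using that by (auto simp: star_mem)
    then show ?thesis using ends e12 by auto
  qed
  have "f \<inter> ?C \<noteq> {}" if "f \<in> P" "f \<subseteq> ?C" for f
    using simple_edgesD[OF s, of f] that PE by blast
  then have "{e \<in> P. e \<subseteq> ?C} = {{v1, u}, {u, v2}}"
    using meet ein v1 v2 by (auto simp: insert_commute)
  moreover have "distinct [v1, u, v2]" using v1 v2 e12 by auto
  ultimately have "lambda_block V P ?C"
    unfolding lambda_block_def is_P3_def using u(1) v1 v2 meet by auto
  moreover have "\<forall>e\<in>star P u. e \<subseteq> ?C" using e12(2) v1(3) v2(3) by auto
  ultimately show ?thesis by blast
qed

lemma lambda_cover_of_stars:
  assumes s: "simple_edges V E" and PE: "P \<subseteq> E"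
    and card12: "\<And>u. u \<in> V \<Longrightarrow> card (star P u) = 1 \<or> card (star P u) = 2"
    and alt: "\<And>e u v. e \<in> P \<Longrightarrow> u \<in> e \<Longrightarrow> v \<in> e \<Longrightarrow> u \<noteq> v \<Longrightarrow>
                 card (star P u) = 2 \<longleftrightarrow> card (star P v) = 1"
  shows "lambda_cover V P"
  unfolding lambda_cover_def
proof
  fix u assume u: "u \<in> V"
  have block: "\<exists>C. lambda_block V P C \<and> (\<forall>e\<in>star P w. e \<subseteq> C)"
    if "w \<in> V" "card (star P w) = 2" for w
    using centre_block[OF s PE that] alt that(2) by blast
  show "\<exists>C. u \<in> C \<and> lambda_block V P C"
  proof (cases "card (star P u) = 2")
    case True
    then obtain e e' where "star P u = {e, e'}" by (meson card_2_iff)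
    then have e: "e \<in> star P u" by blast
    obtain C where "lambda_block V P C" "\<forall>e\<in>star P u. e \<subseteq> C" using block[OF u True] by blast
    moreover have "u \<in> e" using e by (simp add: star_mem)
    ultimately show ?thesis using e by blast
  next
    case False
    then have "card (star P u) = 1" using card12[OF u] by blast
    then obtain e where e: "star P u = {e}" by (rule card_1_singletonE)
    then have eP: "e \<in> P" "u \<in> e" by (auto simp: star_mem)
    obtain v where v: "v \<noteq> u" "v \<in> V" "e = {u, v}"
      using simple_edges_other_end[OF s] eP PE by blast
    have "card (star P v) = 2" using alt[OF eP(1) _ eP(2), of v] v e by auto
    then obtain C where "lambda_block V P C" "\<forall>e\<in>star P v. e \<subseteq> C" using block[OF v(2)] by blast
    moreover have "e \<in> star P v" using eP v by (simp add: star_mem)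
    ultimately show ?thesis using eP(2) by blast
  qed
qed

section \<open>The composed graph\<close>

lemma nbrs_D:
  assumes "simple_graph H" "y \<in> nbrs H x"
  shows "y \<in> verts H \<and> x \<in> verts H \<and> y \<noteq> x \<and> {x, y} \<in> edges H"
proof -
  have e: "{x, y} \<in> edges H" using assms(2) by (simp add: nbrs_def adj_def)
  obtain p q where "p \<noteq> q" "p \<in> verts H" "q \<in> verts H" "{x, y} = {p, q}"
    using simple_edgesD[OF simple_graph_edges[OF assms(1)] e] by blast
  then show ?thesis using e by (auto simp: doubleton_eq_iff)
qed

lemma nbrs_sym: "y \<in> nbrs H x \<longleftrightarrow> x \<in> nbrs H y"
  by (simp add: nbrs_def adj_def insert_commute)

lemma alpha_mem: "p \<in> alpha phi e \<longleftrightarrow> fst p \<in> e \<and> snd p = phi (fst p) e"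
  by (cases p) (auto simp: alpha_def)

lemma fst_alpha: "fst ` alpha phi e = e"
  by (force simp: alpha_def)

lemma alpha_doubleton: "alpha phi {u, v} = {(u, phi u {u, v}), (v, phi v {u, v})}"
  by (simp add: alpha_def)

lemma alpha_inj: "alpha phi e = alpha phi e' \<Longrightarrow> e = e'"
  using fst_alpha by metis

lemma lift_edges_mem: "f \<in> lift_edges u E \<longleftrightarrow> (\<exists>e\<in>E. f = Pair u ` e)"
  by (auto simp: lift_edges_def)

lemma lift_edges_mono: "E \<subseteq> E' \<Longrightarrow> lift_edges u E \<subseteq> lift_edges u E'"
  by (auto simp: lift_edges_def)

text \<open>An alpha-edge has its ends over two different vertices of B, so it is never lifted.\<close>
lemma alpha_not_lifted:
  assumes "e = {p, q}" "p \<noteq> q"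
  shows "alpha phi e \<notin> lift_edges u E"
proof
  assume "alpha phi e \<in> lift_edges u E"
  then have "fst ` alpha phi e \<subseteq> {u}" by (auto simp: lift_edges_mem)
  then show False using assms fst_alpha by (metis insert_subset singletonD)
qed

locale composition =
  fixes B :: "'b graph" and A :: "'b \<Rightarrow> 'a graph" and a :: "'b \<Rightarrow> 'a"
    and phi :: "'b \<Rightarrow> 'b set \<Rightarrow> 'a"
  assumes comp: "composition_data B A a phi"
begin

abbreviation "VB \<equiv> verts B"
abbreviation "EB \<equiv> edges B"
abbreviation "G \<equiv> compose B A a phi"
abbreviation "VG \<equiv> verts G"
abbreviation "EG \<equiv> edges G"
abbreviation "N u \<equiv> nbrs (A u) (a u)"
abbreviation "al \<equiv> alpha phi"

lemma B_simple: "simple_edges VB EB"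
  using comp by (simp add: composition_data_def cubic_def simple_graph_edges)

lemma A_data: "u \<in> VB \<Longrightarrow> simple_graph (A u) \<and> a u \<in> verts (A u) \<and> degree (A u) (a u) = 3 \<and>
    bij_betw (phi u) (inc_edges B u) (N u)"
  using comp by (simp add: composition_data_def)

lemma A_simple: "u \<in> VB \<Longrightarrow> simple_edges (verts (A u)) (edges (A u))"
  using A_data simple_graph_edges by blast

lemma N_card: "u \<in> VB \<Longrightarrow> card (N u) = 3"
  using A_data by (simp add: degree_def)

lemma N_D: "u \<in> VB \<Longrightarrow> y \<in> N u \<Longrightarrow> y \<in> verts (A u) \<and> y \<noteq> a u \<and> {a u, y} \<in> edges (A u)"
  using nbrs_D[OF conjunct1[OF A_data]] by blast

lemma B_edge_other_end: "e \<in> EB \<Longrightarrow> u \<in> e \<Longrightarrow> \<exists>v. v \<noteq> u \<and> v \<in> VB \<and> u \<in> VB \<and> e = {u, v}"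
  using simple_edges_other_end[OF B_simple] by blast

lemma B_edge_verts: "e \<in> EB \<Longrightarrow> u \<in> e \<Longrightarrow> u \<in> VB"
  using B_edge_other_end by blast

lemma phi_inj: "e \<in> EB \<Longrightarrow> e' \<in> EB \<Longrightarrow> u \<in> e \<Longrightarrow> u \<in> e' \<Longrightarrow> phi u e = phi u e' \<Longrightarrow> e = e'"
  using A_data B_edge_verts by (auto simp: inc_edges_def bij_betw_def inj_on_def)

lemma phi_N: "e \<in> EB \<Longrightarrow> u \<in> e \<Longrightarrow> phi u e \<in> N u"
  using A_data B_edge_verts by (fastforce simp: inc_edges_def bij_betw_def)

lemma phi_image: "u \<in> VB \<Longrightarrow> phi u ` inc_edges B u = N u"
  using A_data bij_betw_imp_surj_on by blast

lemma inc_edges_card: assumes u: "u \<in> VB" shows "card (inc_edges B u) = 3" "finite (inc_edges B u)"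
proof -
  show "card (inc_edges B u) = 3"
    using A_data[OF u] bij_betw_same_card N_card[OF u] by metis
  then show "finite (inc_edges B u)" by (intro card_ge_0_finite) simp
qed

lemma VG_mem: "p \<in> VG \<longleftrightarrow> fst p \<in> VB \<and> snd p \<in> verts (A (fst p)) \<and> snd p \<noteq> a (fst p)"
  by (cases p) (auto simp: compose_def verts_def)

lemma attach_VG: "e \<in> EB \<Longrightarrow> u \<in> e \<Longrightarrow> (u, phi u e) \<in> VG"
  using phi_N N_D B_edge_verts by (auto simp: VG_mem)

lemma alpha_edge_ends:
  assumes "e \<in> EB"
  shows "\<exists>u v. u \<noteq> v \<and> e = {u, v} \<and> al e = {(u, phi u e), (v, phi v e)} \<and>
           (u, phi u e) \<in> VG \<and> (v, phi v e) \<in> VG"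
proof -
  obtain u v where "u \<noteq> v" "e = {u, v}" using simple_edgesD[OF B_simple assms] by blast
  then show ?thesis using attach_VG[OF assms] alpha_doubleton[of phi u v] by blast
qed

lemma EG_cases:
  assumes "f \<in> EG"
  obtains (lifted) u e where "u \<in> VB" "e \<in> edges (A u)" "a u \<notin> e" "f = Pair u ` e"
    | (alpha) e where "e \<in> EB" "f = al e"
  using assms by (auto simp: compose_def edges_def lift_edges_def del_verts_def)

lemma lifted_in_EG: "u \<in> VB \<Longrightarrow> e \<in> edges (A u) \<Longrightarrow> a u \<notin> e \<Longrightarrow> Pair u ` e \<in> EG"
  by (force simp: compose_def edges_def lift_edges_def del_verts_def)

lemma alpha_in_EG: "e \<in> EB \<Longrightarrow> al e \<in> EG"
  by (simp add: compose_def edges_def)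

lemma G_simple: "simple_edges VG EG"
  unfolding simple_edges_def
proof
  fix f assume "f \<in> EG"
  then show "\<exists>x y. x \<noteq> y \<and> x \<in> VG \<and> y \<in> VG \<and> f = {x, y}"
  proof (cases rule: EG_cases)
    case (lifted u e)
    obtain x y where xy: "x \<noteq> y" "x \<in> verts (A u)" "y \<in> verts (A u)" "e = {x, y}"
      using simple_edgesD[OF A_simple[OF lifted(1)] lifted(2)] by blast
    then have "(u, x) \<in> VG" "(u, y) \<in> VG" "f = {(u, x), (u, y)}" using lifted by (auto simp: VG_mem)
    then show ?thesis using xy(1) by blast
  next
    case (alpha e)
    obtain u v where "u \<noteq> v" "al e = {(u, phi u e), (v, phi v e)}"
        "(u, phi u e) \<in> VG" "(v, phi v e) \<in> VG"
      using alpha_edge_ends[OF alpha(1)] by blast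
    then show ?thesis using alpha(2)
      by (intro exI[of _ "(u, phi u e)"] exI[of _ "(v, phi v e)"]) simp
  qed
qed

lemma EG_VG: "f \<in> EG \<Longrightarrow> p \<in> f \<Longrightarrow> p \<in> VG"
  using simple_edgesD[OF G_simple] by blast

lemma fibre_edge:
  assumes f: "f \<in> EG" and fu: "\<And>p. p \<in> f \<Longrightarrow> fst p = u"
  shows "u \<in> VB \<and> snd ` f \<in> edges (A u) \<and> a u \<notin> snd ` f"
  using f
proof (cases rule: EG_cases)
  case (lifted w e)
  obtain x where "x \<in> e" using simple_edgesD[OF A_simple[OF lifted(1)] lifted(2)] by blast
  then have "w = u" using fu lifted(4) by fastforce
  moreover have "snd ` f = e" using lifted(4) by force
  ultimately show ?thesis using lifted by simp
next
  case (alpha e)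
  obtain x y where "x \<noteq> y" "e = {x, y}" using simple_edgesD[OF B_simple alpha(1)] by blast
  moreover have "fst ` f = e" using alpha(2) fst_alpha by metis
  ultimately show ?thesis using fu by (metis imageE insertI1 insert_commute)
qed

lemma crossing_edge:
  assumes f: "f \<in> EG" and p: "p \<in> f" and q: "q \<in> f" and ne: "fst p \<noteq> fst q"
  shows "\<exists>e\<in>EB. f = al e"
  using f by (cases rule: EG_cases) (use p q ne in auto)

lemma alpha_attach:
  assumes "e \<in> EB" "q \<in> al e" "fst q = u"
  shows "q = (u, phi u e)" "u \<in> e"
  using assms by (auto simp: alpha_mem prod_eq_iff)

end

section \<open>A Lambda-factor of G induces a Lambda-factor of B\<close>

text \<open>The order condition of the theorem, in the form used for counting: every fibre
  A u - a u has size 1 modulo 3.\<close>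
locale composition_mod3 = composition +
  assumes order_mod3: "u \<in> verts B \<Longrightarrow> card (verts (A u)) mod 3 = 2"

locale factor = composition_mod3 +
  fixes Q
  assumes Q: "lambda_factor G Q"
begin

definition PQ where "PQ = {e \<in> EB. al e \<in> Q}"

abbreviation "cp x \<equiv> component (VG, Q) x"

definition fibre where "fibre u = {p \<in> VG. fst p = u}"

definition share where "share u e = card (cp (u, phi u e) \<inter> fibre u)"

lemma fibre_mem: "p \<in> fibre u \<longleftrightarrow> p \<in> VG \<and> fst p = u"
  by (simp add: fibre_def)

lemma Q_EG: "Q \<subseteq> EG" and Q_cover: "lambda_cover VG Q"
  using Q lambda_factor_iff_cover[OF G_simple] by blast+

lemma PQ_D: "e \<in> PQ \<Longrightarrow> e \<in> EB \<and> al e \<in> Q"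
  by (simp add: PQ_def)

lemma cp_block: "x \<in> VG \<Longrightarrow> x \<in> cp x \<and> lambda_block VG Q (cp x)"
  using Q_cover lambda_block_component unfolding lambda_cover_def by metis

lemma cp_eq: "x \<in> VG \<Longrightarrow> y \<in> cp x \<Longrightarrow> cp y = cp x"
  using cp_block lambda_block_component by metis

lemma cp_edge: "f \<in> Q \<Longrightarrow> x \<in> f \<Longrightarrow> f \<subseteq> cp x"
proof -
  assume f: "f \<in> Q" "x \<in> f"
  then have x: "x \<in> VG" using Q_EG EG_VG by blast
  have "f \<inter> cp x \<noteq> {}" using f(2) cp_block[OF x] by blast
  then show ?thesis using lambda_blockD(3)[OF conjunct2[OF cp_block[OF x]] f(1)] by blast
qed

lemma cp_card: "x \<in> VG \<Longrightarrow> card (cp x) = 3 \<and> finite (cp x)"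
  using P3_card lambda_blockD(2) cp_block by metis

lemma alpha_neighbour:
  assumes e: "e \<in> EB" and q: "q \<in> al e" and qr: "{q, r} \<in> Q" and r: "r \<notin> al e"
  shows "fst r = fst q \<and> snd r \<noteq> snd q"
proof -
  have f: "{q, r} \<in> EG" using qr Q_EG by blast
  have "fst r = fst q"
  proof (rule ccontr)
    assume "fst r \<noteq> fst q"
    then obtain e' where e': "e' \<in> EB" "{q, r} = al e'" using crossing_edge[OF f, of q r] by auto
    have "q \<in> al e'" using e'(2) by auto
    then have "fst q \<in> e'" "snd q = phi (fst q) e'" by (auto simp: alpha_mem)
    moreover have "fst q \<in> e" "snd q = phi (fst q) e" using q by (auto simp: alpha_mem)
    ultimately have "e' = e" using phi_inj[OF e'(1) e] by simp
    then show False using e' r by auto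
  qed
  moreover have "q \<noteq> r" using q r by auto
  ultimately show ?thesis by (simp add: prod_eq_iff)
qed

lemma alpha_component:
  assumes e: "e \<in> PQ" and uv: "e = {u, v}" "u \<noteq> v"
  shows "(\<exists>y. cp (u, phi u e) = {(u, phi u e), (v, phi v e), (u, y)} \<and> y \<noteq> phi u e \<and>
            {(u, phi u e), (u, y)} \<in> Q)
       \<or> (\<exists>y. cp (u, phi u e) = {(u, phi u e), (v, phi v e), (v, y)} \<and> y \<noteq> phi v e \<and>
            {(v, phi v e), (v, y)} \<in> Q)"
proof -
  have eB: "e \<in> EB" and aQ: "al e \<in> Q" using PQ_D[OF e] by auto
  have aleq: "al e = {(u, phi u e), (v, phi v e)}" using uv alpha_doubleton[of phi u v] by simp
  let ?D = "cp (u, phi u e)"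
  have blk: "lambda_block VG Q ?D" using cp_block attach_VG[OF eB] uv by simp
  have aD: "al e \<in> {f \<in> Q. f \<subseteq> ?D}" using cp_edge[OF aQ] aleq aQ by simp
  obtain p q r where pqr: "distinct [p, q, r]" "?D = {p, q, r}"
      "{f \<in> Q. f \<subseteq> ?D} = {{p, q}, {q, r}}" "al e = {p, q}"
    using P3_first_edge[OF lambda_blockD(2)[OF blk] aD] by (elim exE conjE) (rule that; assumption)
  have qr: "{q, r} \<in> Q" using pqr(3) by blast
  have "fst r = fst q \<and> snd r \<noteq> snd q"
    using alpha_neighbour[OF eB _ qr] pqr(1,4) by auto
  moreover have "(p = (u, phi u e) \<and> q = (v, phi v e)) \<or> (p = (v, phi v e) \<and> q = (u, phi u e))"
    using pqr(4) aleq by (auto simp: doubleton_eq_iff)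
  ultimately show ?thesis
    using pqr(2) qr by (cases r) (auto simp: insert_commute)
qed

lemma cp_other_end:
  assumes e: "e \<in> PQ" and uv: "e = {u, v}"
  shows "cp (v, phi v e) = cp (u, phi u e)"
proof -
  have eB: "e \<in> EB" using PQ_D e by blast
  have "al e \<subseteq> cp (u, phi u e)" using cp_edge[OF conjunct2[OF PQ_D[OF e]]] uv
    by (simp add: alpha_doubleton)
  then have "(v, phi v e) \<in> cp (u, phi u e)" using uv by (simp add: alpha_doubleton)
  then show ?thesis using cp_eq attach_VG[OF eB] uv by simp
qed

lemma alpha_component_share:
  assumes e: "e \<in> PQ" and uv: "e = {u, v}" "u \<noteq> v"
  shows "(\<exists>y. cp (u, phi u e) \<inter> fibre u = {(u, phi u e), (u, y)} \<and> y \<noteq> phi u e \<and>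
             {(u, phi u e), (u, y)} \<in> Q \<and> share u e = 2 \<and> share v e = 1 \<and>
             cp (u, phi u e) = {(u, phi u e), (v, phi v e), (u, y)})
       \<or> (cp (u, phi u e) \<inter> fibre u = {(u, phi u e)} \<and> share u e = 1 \<and> share v e = 2)"
proof -
  have eB: "e \<in> EB" using PQ_D e by blast
  have V: "(u, phi u e) \<in> VG" "(v, phi v e) \<in> VG" using attach_VG[OF eB] uv by auto
  have cpv: "cp (v, phi v e) = cp (u, phi u e)" using cp_other_end[OF e uv(1)] .
  have inVG: "\<And>p q. {p, q} \<in> Q \<Longrightarrow> q \<in> VG" using Q_EG EG_VG by blast
  from alpha_component[OF e uv] show ?thesis
  proof (elim disjE exE conjE)
    fix y assume y: "cp (u, phi u e) = {(u, phi u e), (v, phi v e), (u, y)}" "y \<noteq> phi u e"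
      "{(u, phi u e), (u, y)} \<in> Q"
    have s1: "cp (u, phi u e) \<inter> fibre u = {(u, phi u e), (u, y)}"
      using y(1) V inVG[OF y(3)] uv(2) by (auto simp: fibre_mem)
    have s2: "cp (v, phi v e) \<inter> fibre v = {(v, phi v e)}"
      using cpv y(1) V uv(2) by (auto simp: fibre_mem)
    show ?thesis using s1 s2 y by (intro disjI1 exI[of _ y]) (simp add: share_def)
  next
    fix y assume y: "cp (u, phi u e) = {(u, phi u e), (v, phi v e), (v, y)}" "y \<noteq> phi v e"
      "{(v, phi v e), (v, y)} \<in> Q"
    have s1: "cp (u, phi u e) \<inter> fibre u = {(u, phi u e)}"
      using y(1) V uv(2) by (auto simp: fibre_mem)
    have s2: "cp (v, phi v e) \<inter> fibre v = {(v, phi v e), (v, y)}"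
      using cpv y(1) V inVG[OF y(3)] uv(2) by (auto simp: fibre_mem)
    show ?thesis using s1 s2 y(2) by (simp add: share_def)
  qed
qed

lemma star_PQ_other_end:
  assumes "e \<in> star PQ u" obtains v where "e \<in> PQ" "v \<noteq> u" "e = {u, v}"
  using assms B_edge_other_end PQ_D by (metis star_mem)

lemma share_1_or_2: assumes "e \<in> star PQ u" shows "share u e = 1 \<or> share u e = 2"
  using assms alpha_component_share by (metis star_PQ_other_end)

lemma share_two:
  assumes e: "e \<in> star PQ u" and two: "share u e = 2"
  shows "\<exists>y. cp (u, phi u e) \<inter> fibre u = {(u, phi u e), (u, y)} \<and> y \<noteq> phi u e \<and>
           {(u, phi u e), (u, y)} \<in> Q"
proof -
  obtain v where "e \<in> PQ" "v \<noteq> u" "e = {u, v}" using star_PQ_other_end[OF e] .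
  then show ?thesis using alpha_component_share[of e u v] two by auto
qed

lemma share_one:
  assumes e: "e \<in> star PQ u" and not_two: "share u e \<noteq> 2"
  shows "cp (u, phi u e) \<inter> fibre u = {(u, phi u e)}"
proof -
  obtain v where "e \<in> PQ" "v \<noteq> u" "e = {u, v}" using star_PQ_other_end[OF e] .
  then show ?thesis using alpha_component_share[of e u v] not_two by auto
qed

text \<open>Different PQ-edges at u have different components: a component has only 3 vertices.\<close>
lemma alpha_components_disjoint:
  assumes e: "e \<in> PQ" "e' \<in> PQ" "u \<in> e" "u \<in> e'" "e \<noteq> e'"
  shows "cp (u, phi u e) \<inter> cp (u, phi u e') = {}"
proof (rule ccontr)
  assume "cp (u, phi u e) \<inter> cp (u, phi u e') \<noteq> {}"
  have eB: "e \<in> EB" "e' \<in> EB" using PQ_D e by auto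
  have V: "(u, phi u e) \<in> VG" "(u, phi u e') \<in> VG" using attach_VG eB e by auto
  have eq: "cp (u, phi u e) = cp (u, phi u e')"
    using \<open>cp (u, phi u e) \<inter> cp (u, phi u e') \<noteq> {}\<close> cp_eq[OF V(1)] cp_eq[OF V(2)] by blast
  obtain v where v: "v \<noteq> u" "e = {u, v}" using B_edge_other_end[OF eB(1) e(3)] by blast
  obtain v' where v': "v' \<noteq> u" "e' = {u, v'}" using B_edge_other_end[OF eB(2) e(4)] by blast
  have "phi u e \<noteq> phi u e'" using phi_inj[OF eB e(3,4)] e(5) by blast
  then have four: "card {(u, phi u e), (v, phi v e), (u, phi u e'), (v', phi v' e')} = 4"
    using v v' e(5) by auto
  have "al e \<subseteq> cp (u, phi u e)" "al e' \<subseteq> cp (u, phi u e')"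
    using cp_edge PQ_D e by (auto simp: alpha_mem)
  then have "{(u, phi u e), (v, phi v e), (u, phi u e'), (v', phi v' e')} \<subseteq> cp (u, phi u e)"
    using eq v v' by (auto simp: alpha_mem)
  then have "4 \<le> card (cp (u, phi u e))" using card_mono cp_card[OF V(1)] four by metis
  then show False using cp_card[OF V(1)] by simp
qed

definition rest where "rest u = fibre u - (\<Union>e\<in>star PQ u. cp (u, phi u e))"

lemma fibre_eq: "u \<in> VB \<Longrightarrow> fibre u = Pair u ` (verts (A u) - {a u})"
  by (auto simp: fibre_mem VG_mem)

lemma fibre_card: assumes u: "u \<in> VB" shows "finite (fibre u)" "card (fibre u) mod 3 = 1"
proof -
  have fin: "finite (verts (A u))" and au: "a u \<in> verts (A u)"
    using A_data[OF u] by (auto simp: simple_graph_def)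
  then show "finite (fibre u)" using fibre_eq[OF u] by simp
  have "card (fibre u) = card (verts (A u)) - 1"
    using fibre_eq[OF u] au fin by (simp add: card_image inj_on_def)
  moreover have "card (verts (A u)) = 3 * (card (verts (A u)) div 3) + 2"
    using div_mult_mod_eq[of "card (verts (A u))" 3] order_mod3[OF u] by simp
  ultimately have "card (fibre u) = 3 * (card (verts (A u)) div 3) + 1" by simp
  then show "card (fibre u) mod 3 = 1" by simp
qed

lemma star_PQ_inc: "star PQ u \<subseteq> inc_edges B u"
  by (auto simp: inc_edges_def PQ_def star_mem)

lemma star_PQ_card: "u \<in> VB \<Longrightarrow> finite (star PQ u) \<and> card (star PQ u) \<le> 3"
  using star_PQ_inc inc_edges_card card_mono finite_subset by metis

lemma attach_in_cp: "e \<in> star PQ u \<Longrightarrow> (u, phi u e) \<in> VG \<and> (u, phi u e) \<in> cp (u, phi u e)"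
  using attach_VG PQ_D cp_block by (simp add: star_mem)

text \<open>The rest is a union of components of Q: a component meeting it cannot reach another
  fibre, since the only Q-edges leaving the fibre are alpha-edges at u.\<close>
lemma rest_closed:
  assumes u: "u \<in> VB" and x: "x \<in> rest u"
  shows "cp x \<subseteq> rest u"
proof -
  have xS: "x \<in> fibre u" and xn: "\<And>e. e \<in> star PQ u \<Longrightarrow> x \<notin> cp (u, phi u e)"
    using x by (auto simp: rest_def)
  have xV: "x \<in> VG" using xS by (simp add: fibre_mem)
  have disj: "cp x \<inter> cp (u, phi u e) = {}" if e: "e \<in> star PQ u" for e
  proof (rule ccontr)
    assume "cp x \<inter> cp (u, phi u e) \<noteq> {}"
    then have "cp x = cp (u, phi u e)" using cp_eq xV attach_in_cp[OF e] by blast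
    then show False using cp_block[OF xV] xn[OF e] by simp
  qed
  have "cp x \<subseteq> fibre u"
  proof (rule ccontr)
    assume out: "\<not> cp x \<subseteq> fibre u"
    have p3: "is_P3 (cp x) {f \<in> Q. f \<subseteq> cp x}" and xx: "x \<in> cp x"
      using cp_block[OF xV] lambda_blockD(2) by blast+
    obtain f where "f \<in> {f \<in> Q. f \<subseteq> cp x}" "f \<inter> fibre u \<noteq> {}" "\<not> f \<subseteq> fibre u"
      using P3_crossing_edge[OF p3 xx xS out] by blast
    then have f: "f \<in> Q" "f \<subseteq> cp x" "f \<inter> fibre u \<noteq> {}" "\<not> f \<subseteq> fibre u" by auto
    obtain p q where pq: "p \<in> f" "p \<in> fibre u" "q \<in> f" "q \<notin> fibre u" using f(3,4) by blast
    have fE: "f \<in> EG" using f(1) Q_EG by blast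
    then have "fst q \<noteq> fst p" using EG_VG pq by (auto simp: fibre_mem)
    then obtain e where e: "e \<in> EB" "f = al e" using crossing_edge[OF fE pq(1,3)] by metis
    have "p = (u, phi u e)" "u \<in> e" using alpha_attach[OF e(1)] e(2) pq(1,2)
      by (auto simp: fibre_mem)
    moreover have "e \<in> star PQ u" using e f(1) \<open>u \<in> e\<close> by (simp add: PQ_def star_mem)
    ultimately show False using disj attach_in_cp f(2) pq(1) by blast
  qed
  then show ?thesis using disj unfolding rest_def by blast
qed

text \<open>Hence the rest consists of whole components of size 3.\<close>
lemma rest_card_dvd3: assumes u: "u \<in> VB" shows "3 dvd card (rest u)"
proof -
  have xV: "\<And>x. x \<in> rest u \<Longrightarrow> x \<in> VG" by (simp add: rest_def fibre_mem)
  have U: "rest u = \<Union>(cp ` rest u)"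
    using cp_block xV rest_closed[OF u] by blast
  have "pairwise disjnt (cp ` rest u)"
    unfolding pairwise_def disjnt_def using cp_eq xV by blast
  then have "card (rest u) = sum card (cp ` rest u)"
    using card_Union_disjoint U cp_card xV by (metis (no_types, lifting) imageE)
  also have "\<dots> = (\<Sum>C\<in>cp ` rest u. 3)"
    by (rule sum.cong) (use cp_card xV in auto)
  finally show ?thesis by simp
qed

lemma fibre_count:
  assumes u: "u \<in> VB"
  shows "card (fibre u) = card (rest u) + card (star PQ u) + card {e \<in> star PQ u. share u e = 2}"
proof -
  let ?P = "star PQ u" and ?X = "\<lambda>e. cp (u, phi u e) \<inter> fibre u"
  let ?P2 = "{e \<in> ?P. share u e = 2}" and ?P1 = "{e \<in> ?P. share u e \<noteq> 2}"
  have finP: "finite ?P" using star_PQ_card[OF u] by blast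
  have finS: "finite (fibre u)" using fibre_card[OF u] by blast
  have f12: "finite ?P1" "finite ?P2" by (rule finite_subset[OF _ finP], blast)+
  have split12: "?P = ?P1 \<union> ?P2" "?P1 \<inter> ?P2 = {}" by blast+
  have "card (fibre u) = card (rest u) + card (\<Union>e\<in>?P. ?X e)"
  proof -
    have "fibre u = rest u \<union> (\<Union>e\<in>?P. ?X e)" "rest u \<inter> (\<Union>e\<in>?P. ?X e) = {}"
      by (auto simp: rest_def)
    then show ?thesis using card_Un_disjoint finS by (metis finite_Un)
  qed
  also have "card (\<Union>e\<in>?P. ?X e) = (\<Sum>e\<in>?P. share u e)"
    unfolding share_def
  proof (rule card_UN_disjoint[OF finP])
    show "\<forall>i\<in>?P. \<forall>j\<in>?P. i \<noteq> j \<longrightarrow> ?X i \<inter> ?X j = {}"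
    proof (intro ballI impI)
      fix i j assume "i \<in> ?P" "j \<in> ?P" "i \<noteq> j"
      then have "cp (u, phi u i) \<inter> cp (u, phi u j) = {}"
        using alpha_components_disjoint by (simp add: star_mem)
      then show "?X i \<inter> ?X j = {}" by blast
    qed
  qed (use finS in blast)
  also have "\<dots> = (\<Sum>e\<in>?P1. share u e) + (\<Sum>e\<in>?P2. share u e)"
    using sum.union_disjoint[OF f12 split12(2)] by (simp only: split12(1)[symmetric])
  also have "(\<Sum>e\<in>?P1. share u e) = (\<Sum>e\<in>?P1. 1)"
    by (rule sum.cong) (use share_1_or_2 in auto)
  also have "(\<Sum>e\<in>?P2. share u e) = (\<Sum>e\<in>?P2. 2)"
    by (rule sum.cong) auto
  moreover have "card ?P = card ?P1 + card ?P2"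
    using card_Un_disjoint[OF f12 split12(2)] by (simp only: split12(1)[symmetric])
  ultimately show ?thesis by simp
qed

lemma mod3_patterns:
  "(3 * k + p + m) mod 3 = (1::nat) \<Longrightarrow> m \<le> p \<Longrightarrow> p \<le> 3 \<Longrightarrow>
    (p = 1 \<and> m = 0) \<or> (p = 2 \<and> m = 2) \<or> (p = 3 \<and> m = 1)"
  by presburger

lemma star_patterns:
  assumes u: "u \<in> VB"
  shows "(card (star PQ u) = 1 \<and> (\<forall>e\<in>star PQ u. share u e = 1))
       \<or> (card (star PQ u) = 2 \<and> (\<forall>e\<in>star PQ u. share u e = 2))
       \<or> (card (star PQ u) = 3 \<and> card {e \<in> star PQ u. share u e = 2} = 1)"
proof -
  let ?P2 = "{e \<in> star PQ u. share u e = 2}"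
  have finP: "finite (star PQ u)" and c3: "card (star PQ u) \<le> 3" using star_PQ_card[OF u] by auto
  have le: "card ?P2 \<le> card (star PQ u)" using finP by (intro card_mono) auto
  obtain k where "card (rest u) = 3 * k" using rest_card_dvd3[OF u] by blast
  then have "(3 * k + card (star PQ u) + card ?P2) mod 3 = 1"
    using fibre_count[OF u] fibre_card[OF u] by simp
  then have "(card (star PQ u) = 1 \<and> card ?P2 = 0) \<or> (card (star PQ u) = 2 \<and> card ?P2 = 2)
      \<or> (card (star PQ u) = 3 \<and> card ?P2 = 1)"
    by (rule mod3_patterns[OF _ le c3])
  moreover have fin2: "finite ?P2" by (rule finite_subset[OF _ finP]) blast
  ultimately show ?thesis
  proof (elim disjE conjE)
    assume c: "card (star PQ u) = 1" "card ?P2 = 0"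
    have "share u e = 1" if "e \<in> star PQ u" for e
    proof -
      have "e \<notin> ?P2" using c(2) fin2 by simp
      then show ?thesis using share_1_or_2[OF that] that by blast
    qed
    then show ?thesis using c(1) by blast
  next
    assume c: "card (star PQ u) = 2" "card ?P2 = 2"
    then have "?P2 = star PQ u" using card_subset_eq[OF finP, of ?P2] by auto
    then show ?thesis using c(1) by blast
  qed simp
qed

lemma rest_lambda_factor:
  assumes u: "u \<in> VB" and X: "snd ` rest u = verts (A u) - X"
  shows "lambda_factor (del_verts (A u) X) ((`) snd ` {f \<in> Q. f \<subseteq> rest u})"
proof -
  have restS: "rest u \<subseteq> fibre u" by (auto simp: rest_def)
  have cov0: "lambda_cover (rest u) {f \<in> Q. f \<subseteq> rest u}"
  proof (rule lambda_cover_restrict)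
    fix x assume x: "x \<in> rest u"
    then have "x \<in> VG" using restS by (auto simp: fibre_mem)
    then show "\<exists>C. x \<in> C \<and> C \<subseteq> rest u \<and> lambda_block VG Q C"
      using cp_block rest_closed[OF u x] by blast
  qed
  have inj: "inj_on snd (fibre u)" by (auto simp: inj_on_def fibre_mem prod_eq_iff)
  have cov: "lambda_cover (snd ` rest u) ((`) snd ` {f \<in> Q. f \<subseteq> rest u})"
    by (rule lambda_cover_image[OF inj restS _ cov0]) (use restS in blast)
  have "g \<in> edges (del_verts (A u) X)" if g: "g \<in> (`) snd ` {f \<in> Q. f \<subseteq> rest u}" for g
  proof -
    obtain f where f: "f \<in> Q" "f \<subseteq> rest u" "g = snd ` f" using g by blast
    have "\<And>p. p \<in> f \<Longrightarrow> fst p = u" using f(2) restS by (auto simp: fibre_mem)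
    then have "snd ` f \<in> edges (A u)" using fibre_edge f(1) Q_EG by blast
    moreover have "snd ` f \<subseteq> verts (A u) - X" using f(2) X by blast
    ultimately show ?thesis using f(3) by auto
  qed
  then show ?thesis
    using lambda_factor_iff_cover[OF simple_edges_del[OF conjunct1[OF A_data[OF u]]]] cov X by auto
qed

lemma full_star_N:
  assumes u: "u \<in> VB" and c3: "card (star PQ u) = 3"
  shows "phi u ` star PQ u = N u"
proof -
  have "star PQ u = inc_edges B u"
    using card_subset_eq[OF inc_edges_card(2)[OF u] star_PQ_inc] inc_edges_card(1)[OF u] c3 by simp
  then show ?thesis using phi_image[OF u] by simp
qed

lemma full_star_cover:
  assumes u: "u \<in> VB" and c3: "card (star PQ u) = 3"
  shows "\<exists>e3 y. e3 \<in> star PQ u \<and> y \<noteq> phi u e3 \<and> {(u, phi u e3), (u, y)} \<in> Q \<and>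
           (u, y) \<in> cp (u, phi u e3) \<and>
           (\<Union>e\<in>star PQ u. cp (u, phi u e) \<inter> fibre u) = Pair u ` (N u \<union> {y})"
proof -
  let ?P = "star PQ u"
  have NP: "phi u ` ?P = N u" using full_star_N[OF u c3] .
  have "card {e \<in> ?P. share u e = 2} = 1" using star_patterns[OF u] c3 by auto
  then obtain e3 where e3s: "{e \<in> ?P. share u e = 2} = {e3}" by (rule card_1_singletonE)
  then have e3: "e3 \<in> ?P" "share u e3 = 2" by auto
  obtain y where y: "cp (u, phi u e3) \<inter> fibre u = {(u, phi u e3), (u, y)}" "y \<noteq> phi u e3"
      "{(u, phi u e3), (u, y)} \<in> Q"
    using share_two[OF e3] by blast
  have "(\<Union>e\<in>?P. cp (u, phi u e) \<inter> fibre u) = Pair u ` (N u \<union> {y})"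
  proof
    show "(\<Union>e\<in>?P. cp (u, phi u e) \<inter> fibre u) \<subseteq> Pair u ` (N u \<union> {y})"
    proof
      fix p assume "p \<in> (\<Union>e\<in>?P. cp (u, phi u e) \<inter> fibre u)"
      then obtain e where e: "e \<in> ?P" "p \<in> cp (u, phi u e) \<inter> fibre u" by blast
      have "phi u e \<in> N u" using NP e(1) by blast
      moreover have "p = (u, phi u e) \<or> p = (u, y)"
      proof (cases "e = e3")
        case True then show ?thesis using e(2) y(1) by blast
      next
        case False
        then have "share u e \<noteq> 2" using e(1) e3s by blast
        then show ?thesis using share_one[OF e(1)] e(2) by blast
      qed
      ultimately show "p \<in> Pair u ` (N u \<union> {y})" by blast
    qed
    show "Pair u ` (N u \<union> {y}) \<subseteq> (\<Union>e\<in>?P. cp (u, phi u e) \<inter> fibre u)"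
    proof
      fix p assume "p \<in> Pair u ` (N u \<union> {y})"
      then consider "p = (u, y)" | e where "e \<in> ?P" "p = (u, phi u e)" using NP by blast
      then show "p \<in> (\<Union>e\<in>?P. cp (u, phi u e) \<inter> fibre u)"
      proof cases
        case 1 then show ?thesis using y(1) e3(1) by blast
      next
        case 2 then show ?thesis using attach_in_cp[OF 2(1)] by (auto simp: fibre_mem)
      qed
    qed
  qed
  moreover have "(u, y) \<in> cp (u, phi u e3)" using y(1) by blast
  ultimately show ?thesis using e3(1) y(2,3) by blast
qed

lemma full_star_rest:
  assumes u: "u \<in> VB" and c3: "card (star PQ u) = 3"
  shows "\<exists>y. y \<in> verts (A u) - (N u \<union> {a u}) \<and> (\<exists>n\<in>N u. adj (A u) y n) \<and>
           snd ` rest u = verts (A u) - (N u \<union> {a u, y})"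
proof -
  obtain e3 y where e3: "e3 \<in> star PQ u" "y \<noteq> phi u e3" "{(u, phi u e3), (u, y)} \<in> Q"
      "(u, y) \<in> cp (u, phi u e3)"
      and cover: "(\<Union>e\<in>star PQ u. cp (u, phi u e) \<inter> fibre u) = Pair u ` (N u \<union> {y})"
    using full_star_cover[OF u c3] by blast
  have n3: "phi u e3 \<in> N u" using e3(1) phi_N PQ_D by (simp add: star_mem)
  have fE: "{(u, phi u e3), (u, y)} \<in> EG" using e3(3) Q_EG by blast
  moreover have "\<And>p. p \<in> {(u, phi u e3), (u, y)} \<Longrightarrow> fst p = u" by auto
  ultimately have "snd ` {(u, phi u e3), (u, y)} \<in> edges (A u) \<and>
      a u \<notin> snd ` {(u, phi u e3), (u, y)}"
    by (rule fibre_edge[THEN conjunct2])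
  then have yE: "{phi u e3, y} \<in> edges (A u)" "y \<noteq> a u" by auto
  then have yV: "y \<in> verts (A u)"
    using simple_edgesD[OF A_simple[OF u] yE(1)] by (auto simp: doubleton_eq_iff)
  have yN: "y \<notin> N u"
  proof
    assume "y \<in> N u"
    then obtain e' where e': "e' \<in> star PQ u" "y = phi u e'"
      using full_star_N[OF u c3] by blast
    have "(u, y) \<in> cp (u, phi u e')" using attach_in_cp[OF e'(1)] e'(2) by simp
    then have "e' = e3"
      using alpha_components_disjoint[of e' e3 u] e3(1,4) e'(1) by (auto simp: star_mem)
    then show False using e'(2) e3(2) by simp
  qed
  have "adj (A u) y (phi u e3)" using yE(1) by (simp add: adj_def insert_commute)
  moreover have "snd ` rest u = verts (A u) - (N u \<union> {a u, y})"
  proof -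
    have "rest u = fibre u - Pair u ` (N u \<union> {y})" using cover unfolding rest_def by blast
    then have "rest u = Pair u ` (verts (A u) - {a u} - (N u \<union> {y}))" using fibre_eq[OF u] by auto
    then show ?thesis by (auto simp: image_image)
  qed
  ultimately show ?thesis using yV yE(2) yN n3 by blast
qed

end

definition property_h1 :: "'a graph \<Rightarrow> 'a \<Rightarrow> bool" where
  "property_h1 H x \<longleftrightarrow> (\<forall>y \<in> verts H - (nbrs H x \<union> {x}). (\<exists>n\<in>nbrs H x. adj H y n) \<longrightarrow>
      Gamma (del_verts H (nbrs H x \<union> {x, y})) = {})"

definition property_h2 :: "'a graph \<Rightarrow> 'a \<Rightarrow> bool" where
  "property_h2 H x \<longleftrightarrow> (\<forall>z. {x, z} \<in> edges H \<longrightarrow> Gamma (del_verts H {x, z}) \<noteq> {})"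

definition property_h3 :: "'a graph \<Rightarrow> 'a \<Rightarrow> bool" where
  "property_h3 H x \<longleftrightarrow> (\<forall>x1 x2 x4 x5. distinct [x1, x2, x, x4, x5] \<longrightarrow>
      {x1, x2} \<in> edges H \<longrightarrow> {x2, x} \<in> edges H \<longrightarrow> {x, x4} \<in> edges H \<longrightarrow> {x4, x5} \<in> edges H \<longrightarrow>
      Gamma (del_verts H {x1, x2, x, x4, x5}) \<noteq> {})"

context factor begin

lemma no_full_star:
  assumes u: "u \<in> VB" and h1: "property_h1 (A u) (a u)"
  shows "card (star PQ u) \<noteq> 3"
proof
  assume "card (star PQ u) = 3"
  then obtain y where y: "y \<in> verts (A u) - (N u \<union> {a u})" "\<exists>n\<in>N u. adj (A u) y n"
      "snd ` rest u = verts (A u) - (N u \<union> {a u, y})"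
    using full_star_rest[OF u] by blast
  have "Gamma (del_verts (A u) (N u \<union> {a u, y})) = {}"
    using h1 y(1,2) unfolding property_h1_def by blast
  then show False using rest_lambda_factor[OF u y(3)] by (simp add: Gamma_def)
qed

text \<open>Under (h1), PQ is a Lambda-factor of B: by the counting patterns every
  vertex meets one or two PQ-edges, and along each PQ-edge these numbers alternate.\<close>
lemma PQ_lambda_factor:
  assumes h1: "\<And>u. u \<in> VB \<Longrightarrow> property_h1 (A u) (a u)"
  shows "PQ \<in> Gamma B"
proof -
  have pattern: "card (star PQ u) = 1 \<and> share u e = 1 \<or> card (star PQ u) = 2 \<and> share u e = 2"
    if "u \<in> VB" "e \<in> star PQ u" for u e
    using star_patterns[OF that(1)] no_full_star[OF that(1) h1[OF that(1)]] that(2) by auto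
  have card12: "card (star PQ u) = 1 \<or> card (star PQ u) = 2" if u: "u \<in> VB" for u
    using star_patterns[OF u] no_full_star[OF u h1[OF u]] by auto
  have alt: "card (star PQ u) = 2 \<longleftrightarrow> card (star PQ v) = 1"
    if e: "e \<in> PQ" "u \<in> e" "v \<in> e" "u \<noteq> v" for e u v
  proof -
    obtain w where w: "w \<noteq> u" "e = {u, w}" "u \<in> VB" "w \<in> VB"
      using B_edge_other_end PQ_D e(1,2) by blast
    have "v = w" using w e by auto
    then have "(share u e = 2 \<and> share v e = 1) \<or> (share u e = 1 \<and> share v e = 2)"
      using alpha_component_share[OF e(1) w(2) w(1)[symmetric]] by auto
    moreover have "e \<in> star PQ u" "e \<in> star PQ v" using e by (auto simp: star_mem)
    ultimately show ?thesis using pattern w \<open>v = w\<close> by fastforce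
  qed
  have "lambda_cover VB PQ" using lambda_cover_of_stars[OF B_simple _ card12 alt]
    by (auto simp: PQ_def)
  then show ?thesis using lambda_factor_iff_cover[OF B_simple] by (auto simp: Gamma_def PQ_def)
qed

end

text \<open>(gamma3): every Lambda-factor of G lies in Gamma(G,P) for exactly one P, namely P = PQ.\<close>
lemma (in composition_mod3) unique_base_factor:
  assumes h1: "\<And>u. u \<in> VB \<Longrightarrow> property_h1 (A u) (a u)" and Q: "Q \<in> Gamma G"
  shows "\<exists>!P. P \<in> Gamma B \<and> Q \<in> GammaGP B A a phi P"
proof -
  interpret factor B A a phi Q
    using Q by unfold_locales (simp add: Gamma_def)
  show ?thesis
  proof
    show "PQ \<in> Gamma B \<and> Q \<in> GammaGP B A a phi PQ"
      using PQ_lambda_factor[OF h1] Q by (simp add: GammaGP_def PQ_def)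
  qed (simp add: GammaGP_def PQ_def)
qed

section \<open>The pieces H_u(P) partition G\<close>

locale base_factor = composition_mod3 +
  fixes P
  assumes P: "P \<in> Gamma B"
begin

abbreviation "H u \<equiv> Hgraph B A a phi P u"

definition centre where "centre u \<longleftrightarrow> card (star P u) = 2"
definition end_edge where "end_edge u = (THE e. e \<in> star P u)"
definition other where "other u e = (THE v. v \<in> e \<and> v \<noteq> u)"

text \<open>The attachment vertex of an end vertex belongs to H of the centre across its end edge;
  every other vertex of G belongs to H of the vertex of B it lies over.\<close>
definition moved where "moved p \<longleftrightarrow> \<not> centre (fst p) \<and> snd p = phi (fst p) (end_edge (fst p))"
definition owner where "owner p = (if moved p then other (fst p) (end_edge (fst p)) else fst p)"

lemma PE: "P \<subseteq> EB" and P_cover: "lambda_cover VB P"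
  using P lambda_factor_iff_cover[OF B_simple] by (auto simp: Gamma_def)

lemma centre_alternate:
  assumes e: "e \<in> P" "u \<in> e" "v \<in> e" "u \<noteq> v"
  shows "centre u \<longleftrightarrow> \<not> centre v"
proof -
  have uv: "u \<in> VB" "v \<in> VB" using e PE B_edge_verts by auto
  have "card (star P u) = 2 \<longleftrightarrow> card (star P v) = 1"
    using lambda_cover_star_alternate[OF P_cover uv(1) e] .
  then show ?thesis using lambda_cover_star_card[OF P_cover uv(2)] by (auto simp: centre_def)
qed

lemma other_eq: "e = {u, v} \<Longrightarrow> u \<noteq> v \<Longrightarrow> other u e = v"
  unfolding other_def by (rule the_equality) auto

lemma end_edge_star: assumes u: "u \<in> VB" "\<not> centre u"
  shows "star P u = {end_edge u}" "end_edge u \<in> P" "u \<in> end_edge u"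
proof -
  have "card (star P u) = 1" using lambda_cover_star_card[OF P_cover u(1)] u(2)
    by (auto simp: centre_def)
  then obtain e where e: "star P u = {e}" by (rule card_1_singletonE)
  then show "star P u = {end_edge u}" by (simp add: end_edge_def)
  then show "end_edge u \<in> P" "u \<in> end_edge u" by (auto simp: star_mem)
qed

lemma P_edge_orient:
  assumes e: "e \<in> P"
  obtains z t where "e = {z, t}" "z \<noteq> t" "z \<in> VB" "t \<in> VB" "centre z" "\<not> centre t"
    "end_edge t = e" "moved (t, phi t e)" "owner (t, phi t e) = z"
proof -
  obtain p q where pq: "p \<noteq> q" "e = {p, q}" "p \<in> VB" "q \<in> VB"
    using simple_edgesD[OF B_simple] e PE by blast
  obtain z t where zt: "e = {z, t}" "z \<noteq> t" "z \<in> VB" "t \<in> VB" "centre z" "\<not> centre t"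
    using centre_alternate[OF e, of p q] pq by (cases "centre p") (auto simp: insert_commute)
  have "e \<in> star P t" using e zt(1) by (simp add: star_mem)
  then have "end_edge t = e" using end_edge_star(1)[OF zt(4,6)] by simp
  moreover have "other t e = z" using other_eq[of e t z] zt(1,2) by (simp add: insert_commute)
  ultimately show ?thesis using that zt by (simp add: moved_def owner_def)
qed

lemma H_centre: "centre u \<Longrightarrow> H u = ({u} \<times> (verts (A u) - {a u}) \<union> \<Union>(al ` star P u),
     lift_edges u {e \<in> edges (A u). e \<inter> {a u} = {}} \<union> al ` star P u)"
  by (simp add: Hgraph_def Let_def star_def centre_def)

lemma H_end: "\<not> centre u \<Longrightarrow> H u = ({u} \<times> (verts (A u) - {a u} - {phi u (end_edge u)}),
     lift_edges u {e \<in> edges (A u). e \<inter> {a u} = {} \<and> e \<inter> {phi u (end_edge u)} = {}})"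
  by (simp add: Hgraph_def Let_def star_def centre_def end_edge_def)

lemma moved_owner:
  assumes p: "p \<in> VG" "moved p"
  shows "p = (fst p, phi (fst p) (end_edge (fst p)))" "end_edge (fst p) \<in> P"
    "owner p \<in> VB" "centre (owner p)" "end_edge (fst p) \<in> star P (owner p)"
    "end_edge (fst p) = {fst p, owner p}"
proof -
  have w: "fst p \<in> VB" "\<not> centre (fst p)" using p by (auto simp: VG_mem moved_def)
  show "p = (fst p, phi (fst p) (end_edge (fst p)))" using p(2) by (simp add: moved_def prod_eq_iff)
  have e: "end_edge (fst p) \<in> P" "fst p \<in> end_edge (fst p)" using end_edge_star[OF w] by auto
  then show "end_edge (fst p) \<in> P" by simp
  obtain z t where zt: "end_edge (fst p) = {z, t}" "z \<noteq> t" "z \<in> VB" "centre z" "\<not> centre t"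
      "owner (t, phi t (end_edge (fst p))) = z" "end_edge t = end_edge (fst p)"
    using P_edge_orient[OF e(1)] by metis
  have "t = fst p" using zt(1,4) e(2) w(2) by auto
  then have "owner p = z" using zt(6) \<open>p = (fst p, _)\<close> by metis
  then show "owner p \<in> VB" "centre (owner p)" "end_edge (fst p) \<in> star P (owner p)"
      "end_edge (fst p) = {fst p, owner p}"
    using zt e \<open>t = fst p\<close> by (auto simp: star_mem insert_commute)
qed

lemma owner_VB: "p \<in> VG \<Longrightarrow> owner p \<in> VB"
  using moved_owner(3) by (cases "moved p") (auto simp: owner_def VG_mem)

lemma verts_H_centre:
  assumes u: "u \<in> VB" "centre u"
  shows "verts (H u) = {p \<in> VG. owner p = u}"
proof (intro equalityI subsetI)
  fix p assume p: "p \<in> verts (H u)"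
  show "p \<in> {p \<in> VG. owner p = u}"
  proof (cases "p \<in> {u} \<times> (verts (A u) - {a u})")
    case True then show ?thesis using u by (auto simp: VG_mem owner_def moved_def)
  next
    case False
    then obtain e where e: "e \<in> star P u" "p \<in> al e" using p H_centre[OF u(2)] by auto
    then have eP: "e \<in> P" "u \<in> e" by (auto simp: star_mem)
    obtain z t where zt: "e = {z, t}" "z \<noteq> t" "\<not> centre t" "owner (t, phi t e) = z"
      using P_edge_orient[OF eP(1)] by metis
    have "z = u" using zt eP(2) u(2) by auto
    have eB: "e \<in> EB" using eP(1) PE by blast
    have "fst p \<noteq> u"
    proof
      assume "fst p = u"
      then have "p \<in> VG" using alpha_attach[OF eB e(2)] attach_VG[OF eB] by simp
      then show False using False \<open>fst p = u\<close> by (cases p) (auto simp: VG_mem)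
    qed
    moreover have "fst p \<in> e" using e(2) by (simp add: alpha_mem)
    ultimately have "p = (t, phi t e)" using alpha_attach[OF eB e(2)] zt(1) \<open>z = u\<close> by auto
    then show ?thesis using attach_VG[OF eB] zt(1,4) \<open>z = u\<close> by auto
  qed
next
  fix p assume p: "p \<in> {p \<in> VG. owner p = u}"
  show "p \<in> verts (H u)"
  proof (cases "moved p")
    case True
    have "end_edge (fst p) \<in> star P u" "fst p \<in> end_edge (fst p)"
      using moved_owner(5,6)[of p] p True by auto
    moreover have "snd p = phi (fst p) (end_edge (fst p))" using True by (simp add: moved_def)
    ultimately have "end_edge (fst p) \<in> star P u" "p \<in> al (end_edge (fst p))"
      by (auto simp: alpha_mem)
    then show ?thesis using H_centre[OF u(2)] by auto
  next
    case False
    then show ?thesis using p H_centre[OF u(2)] by (cases p) (auto simp: owner_def VG_mem)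
  qed
qed

lemma verts_H_end:
  assumes u: "u \<in> VB" "\<not> centre u"
  shows "verts (H u) = {p \<in> VG. owner p = u}"
proof (intro equalityI subsetI)
  fix p assume "p \<in> verts (H u)"
  then have "fst p = u" "snd p \<in> verts (A u)" "snd p \<noteq> a u" "snd p \<noteq> phi u (end_edge u)"
    using H_end[OF u(2)] by auto
  then show "p \<in> {p \<in> VG. owner p = u}" using u by (auto simp: VG_mem owner_def moved_def)
next
  fix p assume p: "p \<in> {p \<in> VG. owner p = u}"
  then have "\<not> moved p" using moved_owner(4) u(2) by blast
  then show "p \<in> verts (H u)"
    using p H_end[OF u(2)] u(2) by (cases p) (auto simp: owner_def VG_mem moved_def)
qed

lemma verts_H: "u \<in> VB \<Longrightarrow> p \<in> verts (H u) \<longleftrightarrow> p \<in> VG \<and> owner p = u"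
  using verts_H_centre verts_H_end by blast

lemma verts_H_disjoint: "u \<in> VB \<Longrightarrow> w \<in> VB \<Longrightarrow> u \<noteq> w \<Longrightarrow> verts (H u) \<inter> verts (H w) = {}"
  using verts_H by auto

lemma verts_H_cover: "(\<Union>u\<in>VB. verts (H u)) = VG"
  using verts_H owner_VB by blast

lemma edges_H_cases:
  assumes "f \<in> edges (H u)"
  shows "(\<exists>e\<in>edges (A u). a u \<notin> e \<and> (\<not> centre u \<longrightarrow> phi u (end_edge u) \<notin> e) \<and> f = Pair u ` e)
    \<or> (centre u \<and> (\<exists>e\<in>star P u. f = al e))"
  using assms H_centre H_end by (cases "centre u") (auto simp: lift_edges_mem)

lemma edges_H_EG:
  assumes u: "u \<in> VB" and f: "f \<in> edges (H u)"
  shows "f \<in> EG"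
  using edges_H_cases[OF f]
proof (elim disjE bexE conjE)
  fix e assume "e \<in> edges (A u)" "a u \<notin> e" "f = Pair u ` e"
  then show ?thesis using lifted_in_EG[OF u] by simp
next
  fix e assume "e \<in> star P u" "f = al e"
  then show ?thesis using alpha_in_EG PE by (auto simp: star_mem)
qed

lemma edges_H_verts:
  assumes u: "u \<in> VB" and f: "f \<in> edges (H u)"
  shows "f \<subseteq> verts (H u)"
  using edges_H_cases[OF f]
proof (elim disjE bexE conjE)
  fix e assume e: "e \<in> edges (A u)" "a u \<notin> e" "\<not> centre u \<longrightarrow> phi u (end_edge u) \<notin> e" "f = Pair u ` e"
  have "e \<subseteq> verts (A u)" using simple_edgesD[OF A_simple[OF u] e(1)] by blast
  then show ?thesis using e H_centre H_end by (cases "centre u") auto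
next
  fix e assume "centre u" "e \<in> star P u" "f = al e"
  then show ?thesis using H_centre by auto
qed

lemma H_simple: assumes u: "u \<in> VB" shows "simple_edges (verts (H u)) (edges (H u))"
  unfolding simple_edges_def
proof
  fix f assume f: "f \<in> edges (H u)"
  obtain x y where "x \<noteq> y" "f = {x, y}" using simple_edgesD[OF G_simple edges_H_EG[OF u f]] by blast
  then show "\<exists>x y. x \<noteq> y \<and> x \<in> verts (H u) \<and> y \<in> verts (H u) \<and> f = {x, y}"
    using edges_H_verts[OF u f] by blast
qed

lemma EG_in_H:
  assumes u: "u \<in> VB" and f: "f \<in> EG" and fs: "f \<subseteq> verts (H u)"
  shows "f \<in> edges (H u)"
  using f
proof (cases rule: EG_cases)
  case (lifted w e)
  obtain x y where xy: "x \<noteq> y" "e = {x, y}" using simple_edgesD[OF A_simple[OF lifted(1)] lifted(2)]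
    by blast
  have own: "owner (w, x) = u" "owner (w, y) = u" using fs lifted(4) xy(2) verts_H[OF u] by auto
  have "w = u"
  proof (rule ccontr)
    assume "w \<noteq> u"
    then have "moved (w, x)" "moved (w, y)" using own by (auto simp: owner_def split: if_splits)
    then show False using xy(1) by (simp add: moved_def)
  qed
  then have "\<not> centre u \<Longrightarrow> x \<noteq> phi u (end_edge u) \<and> y \<noteq> phi u (end_edge u)"
    using fs lifted(4) xy(2) H_end by auto
  then show ?thesis using lifted \<open>w = u\<close> xy(2) H_centre H_end
    by (cases "centre u") (auto simp: lift_edges_mem)
next
  case (alpha e)
  obtain p q where pq: "p \<noteq> q" "e = {p, q}" using simple_edgesD[OF B_simple alpha(1)] by blast
  then obtain t where t: "t \<in> e" "t \<noteq> u" by blast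
  have "(t, phi t e) \<in> al e" using t(1) by (simp add: alpha_mem)
  then have tV: "(t, phi t e) \<in> VG" "owner (t, phi t e) = u" using fs alpha(2) verts_H[OF u] by auto
  then have mv: "moved (t, phi t e)" using t(2) by (auto simp: owner_def split: if_splits)
  have "end_edge t = e"
    using moved_owner(1,2)[OF tV(1) mv] PE phi_inj[OF alpha(1) _ t(1)] moved_owner(6)[OF tV(1) mv]
    by (metis fst_conv insertI1 snd_conv subsetD)
  then have "e \<in> star P u" "centre u" using moved_owner(4,5)[OF tV(1) mv] tV(2) by auto
  then show ?thesis using H_centre alpha(2) by auto
qed

lemma alpha_in_H:
  assumes e: "e \<in> EB" and f: "al e \<in> edges (H u)"
  shows "e \<in> star P u \<and> centre u"
proof -
  obtain p q where pq: "p \<noteq> q" "e = {p, q}" using simple_edgesD[OF B_simple e] by blast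
  have "al e \<notin> lift_edges u E" for E using alpha_not_lifted[OF pq(2,1)] .
  then have "centre u \<and> al e \<in> al ` star P u" using f H_centre H_end by (cases "centre u") auto
  then obtain e' where "centre u" "e' \<in> star P u" "al e = al e'" by blast
  then show ?thesis using alpha_inj[of phi e e'] by simp
qed

end

locale split_factor = base_factor +
  fixes Q
  assumes QP: "Q \<in> GammaGP B A a phi P"

sublocale split_factor \<subseteq> factor B A a phi Q
  using QP by unfold_locales (simp add: GammaGP_def)

context split_factor begin

lemma PQ_eq: "PQ = P"
  using QP by (simp add: GammaGP_def PQ_def)

text \<open>The component through alpha(e), e = {z,t} in P with centre z, is owned by z: by the
  counting at the centre z it has its third vertex in the fibre of z.\<close>
lemma alpha_component_owned:
  assumes e: "e \<in> P" "e = {z, t}" "z \<noteq> t" "centre z" "\<not> centre t" "z \<in> VB"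
    and t: "owner (t, phi t e) = z"
    and q: "q \<in> cp (z, phi z e)"
  shows "owner q = z"
proof -
  have ePQ: "e \<in> star PQ z" using e PQ_eq by (simp add: star_mem)
  have "card (star PQ z) = 2" using e(4) PQ_eq by (simp add: centre_def)
  then have "share z e = 2" using star_patterns[OF e(6)] ePQ by auto
  then obtain y where "cp (z, phi z e) = {(z, phi z e), (t, phi t e), (z, y)}"
    using alpha_component_share[of e z t] e(1-3) PQ_eq by auto
  moreover have "owner (z, w) = z" for w using e(4) by (simp add: owner_def moved_def)
  ultimately show ?thesis using q t by auto
qed

lemma rest_owned:
  assumes w: "w \<in> VB" and q: "q \<in> rest w"
  shows "owner q = w"
proof -
  have qS: "fst q = w" "q \<in> VG" using q by (auto simp: rest_def fibre_mem)
  have "\<not> moved q"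
  proof
    assume mv: "moved q"
    then have "\<not> centre w" using qS(1) by (simp add: moved_def)
    then have "end_edge w \<in> star PQ w" using end_edge_star(1)[OF w] by (simp add: PQ_eq)
    moreover have "q = (w, phi w (end_edge w))" using mv qS(1) by (auto simp: moved_def prod_eq_iff)
    ultimately show False using q attach_in_cp by (auto simp: rest_def)
  qed
  then show ?thesis using qS by (simp add: owner_def)
qed

lemma component_owner:
  assumes x: "x \<in> VG" and y: "y \<in> cp x"
  shows "owner y = owner x"
proof -
  let ?w = "fst x"
  have wB: "?w \<in> VB" using x by (simp add: VG_mem)
  show ?thesis
  proof (cases "\<exists>e\<in>star P ?w. x \<in> cp (?w, phi ?w e)")
    case True
    then obtain e where e: "e \<in> star P ?w" "x \<in> cp (?w, phi ?w e)" by blast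
    then have eP: "e \<in> P" "?w \<in> e" by (auto simp: star_mem)
    obtain z t where zt: "e = {z, t}" "z \<noteq> t" "z \<in> VB" "centre z" "\<not> centre t"
        "owner (t, phi t e) = z"
      using P_edge_orient[OF eP(1)] by metis
    have "cp x = cp (?w, phi ?w e)" using cp_eq attach_VG e(2) eP PE by blast
    also have "\<dots> = cp (z, phi z e)"
    proof -
      have "?w = z \<or> ?w = t" using eP(2) zt(1) by blast
      moreover have "cp (t, phi t e) = cp (z, phi z e)" using cp_other_end zt(1) eP(1) PQ_eq by simp
      ultimately show ?thesis by auto
    qed
    finally have "\<And>q. q \<in> cp x \<Longrightarrow> owner q = z"
      using alpha_component_owned[OF eP(1) zt(1,2,4,5,3,6)] by blast
    then show ?thesis using y conjunct1[OF cp_block[OF x]] by simp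
  next
    case False
    then have xR: "x \<in> rest ?w" using x PQ_eq by (auto simp: rest_def fibre_mem)
    have "y \<in> rest ?w" using rest_closed[OF wB xR] y by blast
    then show ?thesis using rest_owned[OF wB] xR by simp
  qed
qed

lemma cp_in_H: assumes x: "x \<in> VG" shows "cp x \<subseteq> verts (H (owner x))"
proof
  fix y assume y: "y \<in> cp x"
  then have "y \<in> VG" using lambda_blockD(1)[OF conjunct2[OF cp_block[OF x]]] by blast
  then show "y \<in> verts (H (owner x))" using verts_H[OF owner_VB[OF x]] component_owner[OF x y]
    by simp
qed

lemma restrict_factor_eq:
  assumes u: "u \<in> VB"
  shows "restrict_factor G Q (H u) = {f \<in> Q. f \<subseteq> verts (H u)}"
proof (intro equalityI subsetI)
  fix f assume "f \<in> restrict_factor G Q (H u)"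
  then show "f \<in> {f \<in> Q. f \<subseteq> verts (H u)}" unfolding restrict_factor_def by blast
next
  fix f assume f: "f \<in> {f \<in> Q. f \<subseteq> verts (H u)}"
  obtain x y where xy: "x \<in> VG" "f = {x, y}" using simple_edgesD[OF G_simple] f Q_EG by blast
  have "owner x = u" using f xy verts_H[OF u] by blast
  then have CV: "cp x \<subseteq> verts (H u)" using cp_in_H[OF xy(1)] by simp
  have "cp x \<in> components (VG, Q)" using xy(1) by (simp add: components_def)
  moreover have "f \<subseteq> cp x" using cp_edge f xy by blast
  moreover have "{e \<in> Q. e \<subseteq> cp x} \<subseteq> edges (H u)" using EG_in_H[OF u] Q_EG CV by blast
  ultimately show "f \<in> restrict_factor G Q (H u)"
    unfolding restrict_factor_def using f CV by (simp add: verts_def[of G, symmetric]) blast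
qed

lemma restrict_lambda_factor:
  assumes u: "u \<in> VB"
  shows "lambda_factor (H u) {f \<in> Q. f \<subseteq> verts (H u)}"
proof -
  have "{f \<in> Q. f \<subseteq> verts (H u)} \<subseteq> edges (H u)" using EG_in_H[OF u] Q_EG by blast
  moreover have "lambda_cover (verts (H u)) {f \<in> Q. f \<subseteq> verts (H u)}"
  proof (rule lambda_cover_restrict)
    fix x assume "x \<in> verts (H u)"
    then have "x \<in> VG" "owner x = u" using verts_H[OF u] by auto
    then show "\<exists>C. x \<in> C \<and> C \<subseteq> verts (H u) \<and> lambda_block VG Q C"
      using cp_block cp_in_H by metis
  qed
  ultimately show ?thesis using lambda_factor_iff_cover[OF H_simple[OF u]] by simp
qed

lemma Q_union: "Q = (\<Union>u\<in>VB. {f \<in> Q. f \<subseteq> verts (H u)})"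
proof (intro equalityI subsetI)
  fix f assume f: "f \<in> Q"
  obtain x where "x \<in> VG" "x \<in> f" using simple_edgesD[OF G_simple] f Q_EG by blast
  then have "f \<subseteq> verts (H (owner x))" "owner x \<in> VB"
    using cp_edge[OF f] cp_in_H owner_VB by blast+
  then show "f \<in> (\<Union>u\<in>VB. {f \<in> Q. f \<subseteq> verts (H u)})" using f by blast
qed blast

end

section \<open>Gluing Lambda-factors of the pieces: the bijection (gamma2)\<close>

context base_factor begin

lemma split_factorI: "Q \<in> GammaGP B A a phi P \<Longrightarrow> split_factor B A a phi P Q"
  by (intro split_factor.intro base_factor_axioms) (simp add: split_factor_axioms_def)

lemma Gamma_H_D:
  assumes "u \<in> VB" "F \<in> Gamma (H u)"
  shows "F \<subseteq> edges (H u)" "lambda_cover (verts (H u)) F" "\<And>f. f \<in> F \<Longrightarrow> f \<subseteq> verts (H u)"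
proof -
  show FE: "F \<subseteq> edges (H u)" and "lambda_cover (verts (H u)) F"
    using assms lambda_factor_iff_cover[OF H_simple] by (auto simp: Gamma_def)
  show "\<And>f. f \<in> F \<Longrightarrow> f \<subseteq> verts (H u)" using edges_H_verts[OF assms(1)] FE by blast
qed

text \<open>Lambda-factors of the pieces glue to a Lambda-factor of G, because the pieces partition
  the vertices of G.\<close>
lemma glue_lambda_factor:
  assumes F: "F \<in> (\<Pi>\<^sub>E u\<in>VB. Gamma (H u))"
  shows "lambda_factor G (\<Union>u\<in>VB. F u)"
proof -
  have Fu: "F u \<in> Gamma (H u)" if "u \<in> VB" for u using F that by auto
  have "lambda_cover (\<Union>u\<in>VB. verts (H u)) (\<Union>u\<in>VB. F u)"
  proof (rule lambda_cover_UN)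
    fix u f assume u: "u \<in> VB" and f: "f \<in> F u"
    then have "f \<in> edges (H u)" using Gamma_H_D(1)[OF u Fu[OF u]] by blast
    then show "f \<subseteq> verts (H u) \<and> f \<noteq> {}" using edges_H_verts[OF u] simple_edgesD[OF H_simple[OF u]]
      by blast
  qed (use verts_H_disjoint Gamma_H_D(2) Fu in auto)
  moreover have "(\<Union>u\<in>VB. F u) \<subseteq> EG" using Gamma_H_D(1) Fu edges_H_EG by blast
  ultimately show ?thesis using lambda_factor_iff_cover[OF G_simple] verts_H_cover by simp
qed

text \<open>The glued factor uses exactly the alpha-edges of P: the attachment vertex of an end
  vertex t lies in the piece of the centre z, whose factor must cover it by alpha({z,t}).\<close>
lemma glue_alpha_edges:
  assumes F: "F \<in> (\<Pi>\<^sub>E u\<in>VB. Gamma (H u))"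
  shows "{e \<in> EB. al e \<in> (\<Union>u\<in>VB. F u)} = P"
proof (intro equalityI subsetI)
  fix e assume "e \<in> {e \<in> EB. al e \<in> (\<Union>u\<in>VB. F u)}"
  then obtain u where "u \<in> VB" "e \<in> EB" "al e \<in> edges (H u)" using Gamma_H_D(1) F by blast
  then show "e \<in> P" using alpha_in_H by (auto simp: star_mem)
next
  fix e assume eP: "e \<in> P"
  then have eB: "e \<in> EB" using PE by blast
  obtain z t where zt: "e = {z, t}" "z \<noteq> t" "z \<in> VB" "centre z" "owner (t, phi t e) = z"
    using P_edge_orient[OF eP] by metis
  have Fz: "F z \<in> Gamma (H z)" using F zt(3) by auto
  have "(t, phi t e) \<in> verts (H z)" using verts_H[OF zt(3)] attach_VG[OF eB] zt(1,5) by simp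
  then obtain C where C: "(t, phi t e) \<in> C" "lambda_block (verts (H z)) (F z) C"
    using Gamma_H_D(2)[OF zt(3) Fz] unfolding lambda_cover_def by blast
  obtain g where g: "g \<in> F z" "(t, phi t e) \<in> g"
    using P3_covers[OF lambda_blockD(2)[OF C(2)] C(1)] by blast
  have "g \<in> edges (H z)" using g(1) Gamma_H_D(1)[OF zt(3) Fz] by blast
  moreover have "g \<noteq> Pair z ` e'" for e' using g(2) zt(2) by auto
  ultimately obtain e' where e': "e' \<in> star P z" "g = al e'" using edges_H_cases by blast
  then have "t \<in> e'" "phi t e = phi t e'" using g(2) by (auto simp: alpha_mem)
  moreover have "e' \<in> EB" "t \<in> e" using e' PE zt(1) by (auto simp: star_mem)
  ultimately have "e' = e" using phi_inj[OF _ eB] by metis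
  then show "e \<in> {e \<in> EB. al e \<in> (\<Union>u\<in>VB. F u)}" using eB g(1) e'(2) zt(3) by blast
qed

lemma glue_GammaGP:
  assumes F: "F \<in> (\<Pi>\<^sub>E u\<in>VB. Gamma (H u))"
  shows "(\<Union>u\<in>VB. F u) \<in> GammaGP B A a phi P"
  using glue_lambda_factor[OF F] glue_alpha_edges[OF F] by (simp add: GammaGP_def)

lemma glue_restrict:
  assumes F: "F \<in> (\<Pi>\<^sub>E u\<in>VB. Gamma (H u))" and u: "u \<in> VB"
  shows "{f \<in> (\<Union>u\<in>VB. F u). f \<subseteq> verts (H u)} = F u"
proof (intro equalityI subsetI)
  fix f assume "f \<in> {f \<in> (\<Union>u\<in>VB. F u). f \<subseteq> verts (H u)}"
  then obtain w where w: "w \<in> VB" "f \<in> F w" "f \<subseteq> verts (H u)" by blast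
  moreover have Fw: "F w \<in> Gamma (H w)" using F w(1) by auto
  then have "f \<in> edges (H w)" using Gamma_H_D(1)[OF w(1)] w(2) by blast
  then have "f \<subseteq> verts (H w)" "f \<noteq> {}"
    using edges_H_verts[OF w(1)] simple_edgesD[OF H_simple[OF w(1)]] by blast+
  ultimately have "w = u" using verts_H_disjoint[OF u w(1)] by blast
  then show "f \<in> F u" using w by simp
qed (use F u Gamma_H_D(3) in blast)

text \<open>(gamma2): restriction to the pieces is a bijection from Gamma(G,P) onto the product of
  the Gamma(H_u(P)); glueing is its inverse.\<close>
theorem restriction_bij:
  "bij_betw (\<lambda>Q. \<lambda>u\<in>VB. restrict_factor G Q (H u)) (GammaGP B A a phi P) (\<Pi>\<^sub>E u\<in>VB. Gamma (H u))"
proof (rule bij_betw_byWitness[where f' = "\<lambda>F. \<Union>u\<in>VB. F u"])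
  show "\<forall>Q\<in>GammaGP B A a phi P. (\<Union>u\<in>VB. (\<lambda>u\<in>VB. restrict_factor G Q (H u)) u) = Q"
    using split_factor.restrict_factor_eq[OF split_factorI] split_factor.Q_union[OF split_factorI]
    by simp
  show "\<forall>F\<in>\<Pi>\<^sub>E u\<in>VB. Gamma (H u). (\<lambda>u\<in>VB. restrict_factor G (\<Union>u\<in>VB. F u) (H u)) = F"
    using split_factor.restrict_factor_eq[OF split_factorI[OF glue_GammaGP]] glue_restrict
    by (auto simp: PiE_iff extensional_def fun_eq_iff)
  show "(\<lambda>Q. \<lambda>u\<in>VB. restrict_factor G Q (H u)) ` GammaGP B A a phi P \<subseteq> (\<Pi>\<^sub>E u\<in>VB. Gamma (H u))"
    using split_factor.restrict_factor_eq[OF split_factorI]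
      split_factor.restrict_lambda_factor[OF split_factorI] by (auto simp: Gamma_def)
  show "(\<lambda>F. \<Union>u\<in>VB. F u) ` (\<Pi>\<^sub>E u\<in>VB. Gamma (H u)) \<subseteq> GammaGP B A a phi P"
    using glue_GammaGP by blast
qed

end

section \<open>Every piece H_u(P) has a Lambda-factor\<close>

lemma card3_eq:
  assumes "card X = 3" "x \<in> X" "y \<in> X" "z \<in> X" "distinct [x, y, z]"
  shows "X = {x, y, z}"
proof -
  have "finite X" using assms(1) by (intro card_ge_0_finite) simp
  then show ?thesis using card_subset_eq[of X "{x, y, z}"] assms by auto
qed

lemma card3_third:
  assumes "card X = 3" "x \<in> X" "y \<in> X" "x \<noteq> y"
  obtains z where "X = {x, y, z}" "z \<noteq> x" "z \<noteq> y"
proof -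
  have "card (X - {x, y}) = 1" using assms by (simp add: card_Diff_subset)
  then obtain z where "X - {x, y} = {z}" by (rule card_1_singletonE)
  then show ?thesis using that assms(2,3) by blast
qed

lemma card3_others:
  assumes "card X = 3" "x \<in> X"
  obtains z z' where "X = {x, z, z'}" "z \<noteq> x" "z' \<noteq> x" "z \<noteq> z'"
proof -
  have "card (X - {x}) = 2" using assms by simp
  then obtain z z' where "z \<noteq> z'" "X - {x} = {z, z'}" by (meson card_2_iff)
  then show ?thesis using that assms(2) by blast
qed

text \<open>In a 3-connected cubic graph with at least 7 vertices, two adjacent neighbours y1, y2 of
  a vertex a have no common neighbour other than a: otherwise the two remaining neighbours of
  a and of that common neighbour would separate {a, y1, y2, p} from the rest.\<close>
lemma cubic_no_double_triangle:
  assumes cub: "cubic H" and kc: "k_connected 3 H" and big: "card (verts H) \<ge> 7"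
    and y: "y1 \<in> nbrs H a" "y2 \<in> nbrs H a" "y1 \<noteq> y2" "y2 \<in> nbrs H y1"
    and p: "p \<in> nbrs H y1" "p \<in> nbrs H y2" "p \<noteq> a"
  shows False
proof -
  have sH: "simple_graph H" using cub by (simp add: cubic_def)
  have deg: "x \<in> verts H \<Longrightarrow> card (nbrs H x) = 3" for x using cub by (simp add: cubic_def degree_def)
  have V: "a \<in> verts H" "y1 \<in> verts H" "y2 \<in> verts H" "p \<in> verts H" and ne: "p \<noteq> y1" "p \<noteq> y2"
    using nbrs_D[OF sH] y p by blast+
  obtain y3 where y3: "nbrs H a = {y1, y2, y3}" using card3_third[OF deg[OF V(1)] y(1,2,3)] by metis
  obtain r where r: "nbrs H p = {y1, y2, r}"
    using card3_third[OF deg[OF V(4)] _ _ y(3)] p nbrs_sym by metis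
  have nb: "a \<in> nbrs H y1" "a \<in> nbrs H y2" "y1 \<in> nbrs H y2" using y nbrs_sym by metis+
  have "y1 \<noteq> a" "y2 \<noteq> a" using nbrs_D[OF sH] y(1,2) by blast+
  then have "nbrs H y1 = {a, y2, p}" "nbrs H y2 = {a, y1, p}"
    using card3_eq[OF deg[OF V(2)] nb(1) y(4) p(1)] card3_eq[OF deg[OF V(3)] nb(2,3) p(2)]
      p(3) ne y(3) by auto
  let ?T = "{a, y1, y2, p}" and ?S = "{y3, r} - {a, y1, y2, p}"
  have closed: "nbrs H x \<subseteq> ?T \<union> ?S" if "x \<in> ?T" for x
    using that y3 r \<open>nbrs H y1 = _\<close> \<open>nbrs H y2 = _\<close> by auto
  have "card ?S \<le> card {y3, r}" by (rule card_mono) auto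
  moreover have "card {y3, r} \<le> 2" by (cases "y3 = r") auto
  ultimately have "card ?S < 3" by simp
  moreover have "?S \<subseteq> verts H" using y3 r nbrs_D[OF sH, of y3 a] nbrs_D[OF sH, of r p] by auto
  ultimately have conn: "connected (del_verts H ?S)" using kc unfolding k_connected_def by blast
  have "card (?T \<union> ?S) \<le> 6"
    using card_mono[of "{a, y1, y2, p, y3, r}" "?T \<union> ?S"] card_length[of "[a, y1, y2, p, y3, r]"]
      by auto
  have "\<not> verts H \<subseteq> ?T \<union> ?S"
  proof
    assume "verts H \<subseteq> ?T \<union> ?S"
    then have "card (verts H) \<le> card (?T \<union> ?S)" by (rule card_mono[rotated]) simp
    then show False using \<open>card (?T \<union> ?S) \<le> 6\<close> big by simp
  qed
  then obtain w where w: "w \<in> verts H" "w \<notin> ?T" "w \<notin> ?S" by blast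
  have "reach (del_verts H ?S) a w" using conn V(1) w unfolding connected_def by auto
  then have "w \<in> ?T"
  proof (rule reach_closed)
    fix x v assume "x \<in> ?T" "v \<in> verts (del_verts H ?S)" "adj (del_verts H ?S) x v"
    then show "v \<in> ?T" using closed[of x] by (auto simp: adj_def nbrs_def)
  qed simp
  then show False using w(2) by blast
qed

lemma cubic_five_path:
  assumes cub: "cubic H" and kc: "k_connected 3 H" and big: "card (verts H) \<ge> 7"
    and y: "y1 \<in> nbrs H a" "y2 \<in> nbrs H a" "y1 \<noteq> y2"
  shows "\<exists>z1 z2. distinct [z1, y1, a, y2, z2] \<and> {z1, y1} \<in> edges H \<and> {y2, z2} \<in> edges H"
proof -
  have sH: "simple_graph H" using cub by (simp add: cubic_def)
  have deg: "x \<in> verts H \<Longrightarrow> card (nbrs H x) = 3" for x using cub by (simp add: cubic_def degree_def)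
  have V: "y1 \<in> verts H" "y2 \<in> verts H" "y1 \<noteq> a" "y2 \<noteq> a" using nbrs_D[OF sH] y by blast+
  have a1: "a \<in> nbrs H y1" "a \<in> nbrs H y2" using y nbrs_sym by metis+
  have edge: "{z, x} \<in> edges H" if "z \<in> nbrs H x" for x z
    using that by (simp add: nbrs_def adj_def insert_commute)
  have irr: "z \<noteq> x" if "z \<in> nbrs H x" for x z using nbrs_D[OF sH that] by blast
  show ?thesis
  proof (cases "y2 \<in> nbrs H y1")
    case False
    obtain z2 z2' where z2: "nbrs H y2 = {a, z2, z2'}" "z2 \<noteq> a"
      using card3_others[OF deg[OF V(2)] a1(2)] by metis
    obtain w w' where w: "nbrs H y1 = {a, w, w'}" "w \<noteq> a" "w' \<noteq> a" "w \<noteq> w'"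
      using card3_others[OF deg[OF V(1)] a1(1)] by metis
    obtain z1 where z1: "z1 \<in> nbrs H y1" "z1 \<noteq> a" "z1 \<noteq> z2"
      using w by (cases "w = z2") auto
    have "z2 \<in> nbrs H y2" using z2(1) by simp
    then have "distinct [z1, y1, a, y2, z2]"
      using z1 z2(2) False irr[of z1 y1] irr[of z2 y2] nbrs_sym[of y1 H y2] V y(3) by auto
    moreover have "{z1, y1} \<in> edges H" "{y2, z2} \<in> edges H"
      using edge[OF z1(1)] edge[OF \<open>z2 \<in> nbrs H y2\<close>] by (simp_all add: insert_commute)
    ultimately show ?thesis by blast
  next
    case True
    obtain p where p: "nbrs H y1 = {a, y2, p}" "p \<noteq> a" "p \<noteq> y2"
      using card3_third[OF deg[OF V(1)] a1(1) True] V by metis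
    obtain q where q: "nbrs H y2 = {a, y1, q}" "q \<noteq> a" "q \<noteq> y1"
      using card3_third[OF deg[OF V(2)] a1(2)] True nbrs_sym V by metis
    have "p \<noteq> q"
      using cubic_no_double_triangle[OF cub kc big y True, of p] p q by auto
    then have "distinct [p, y1, a, y2, q]" using p q irr y V by auto
    then show ?thesis using edge p q by (intro exI[of _ p] exI[of _ q]) (auto simp: insert_commute)
  qed
qed

lemma (in composition) lifted_factor:
  assumes u: "u \<in> VB" and F0: "F0 \<in> Gamma (del_verts (A u) X)"
  shows "lambda_cover (Pair u ` (verts (A u) - X)) ((`) (Pair u) ` F0)"
    "(`) (Pair u) ` F0 \<subseteq> lift_edges u {e \<in> edges (A u). e \<inter> X = {}}"
    "\<And>f. f \<in> (`) (Pair u) ` F0 \<Longrightarrow> f \<subseteq> Pair u ` (verts (A u) - X) \<and> f \<noteq> {}"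
proof -
  have s: "simple_edges (verts (del_verts (A u) X)) (edges (del_verts (A u) X))"
    using simple_edges_del A_data[OF u] by blast
  have F0E: "F0 \<subseteq> {e \<in> edges (A u). e \<inter> X = {}}" and cov: "lambda_cover (verts (A u) - X) F0"
    using F0 lambda_factor_iff_cover[OF s] by (auto simp: Gamma_def)
  show "lambda_cover (Pair u ` (verts (A u) - X)) ((`) (Pair u) ` F0)"
    by (rule lambda_cover_image[OF _ subset_UNIV _ cov]) (auto simp: inj_on_def)
  show "(`) (Pair u) ` F0 \<subseteq> lift_edges u {e \<in> edges (A u). e \<inter> X = {}}"
    using F0E by (auto simp: lift_edges_def)
  fix f assume "f \<in> (`) (Pair u) ` F0"
  then obtain e where e: "e \<in> F0" "f = Pair u ` e" by blast
  have "e \<in> edges (del_verts (A u) X)" using F0E e(1) by auto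
  then obtain x y where "e = {x, y}" "x \<in> verts (A u) - X" "y \<in> verts (A u) - X"
    using simple_edgesD[OF s] by (metis verts_del)
  then show "f \<subseteq> Pair u ` (verts (A u) - X) \<and> f \<noteq> {}" using e(2) by auto
qed

context base_factor begin

text \<open>At an end vertex u, H_u(P) is a copy of A u - {a u, x_u}, which has a Lambda-factor
  by (h2).\<close>
lemma H_end_factor:
  assumes u: "u \<in> VB" "\<not> centre u" and h2: "property_h2 (A u) (a u)"
  shows "Gamma (H u) \<noteq> {}"
proof -
  let ?x = "phi u (end_edge u)" and ?X = "{a u, phi u (end_edge u)}"
  have "?x \<in> N u" using phi_N end_edge_star[OF u] PE by blast
  then have "{a u, ?x} \<in> edges (A u)" using N_D[OF u(1)] by blast
  then obtain F0 where F0: "F0 \<in> Gamma (del_verts (A u) ?X)" using h2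
    by (auto simp: property_h2_def)
  have "verts (H u) = Pair u ` (verts (A u) - ?X)" using H_end[OF u(2)] by auto
  moreover have "(`) (Pair u) ` F0 \<subseteq> edges (H u)"
    using lifted_factor(2)[OF u(1) F0] H_end[OF u(2)] by (auto simp: lift_edges_mem)
  ultimately have "lambda_factor (H u) ((`) (Pair u) ` F0)"
    using lambda_factor_iff_cover[OF H_simple[OF u(1)]] lifted_factor(1)[OF u(1) F0] by simp
  then show ?thesis by (auto simp: Gamma_def)
qed

lemma centre_star:
  assumes u: "u \<in> VB" "centre u"
  obtains v1 v2 where "star P u = {{u, v1}, {u, v2}}" "v1 \<noteq> v2" "v1 \<noteq> u" "v2 \<noteq> u"
    "{u, v1} \<in> EB" "{u, v2} \<in> EB"
proof -
  obtain e1 e2 where e12: "e1 \<noteq> e2" "star P u = {e1, e2}" using u(2) unfolding centre_def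
    by (meson card_2_iff)
  then have "e1 \<in> star P u" "e2 \<in> star P u" by blast+
  then have ein: "e1 \<in> P" "u \<in> e1" "e2 \<in> P" "u \<in> e2" by (simp_all add: star_mem)
  then have eB: "e1 \<in> EB" "e2 \<in> EB" using PE by auto
  obtain v1 where v1: "v1 \<noteq> u" "e1 = {u, v1}" using B_edge_other_end[OF eB(1) ein(2)] by blast
  obtain v2 where v2: "v2 \<noteq> u" "e2 = {u, v2}" using B_edge_other_end[OF eB(2) ein(4)] by blast
  show ?thesis using that[of v1 v2] e12 v1 v2 eB by auto
qed

text \<open>At a centre u with P-edges e1 = {u,v1}, e2 = {u,v2} and a 5-vertex path z1 y1 a y2 z2
  in A u through the attachment vertices y1, y2, a Lambda-factor of H_u(P) consists of the
  paths v1' y1 z1 and v2' y2 z2 through the alpha-edges and a Lambda-factor of A u minus the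
  5-vertex path.\<close>
lemma centre_piece_factor:
  assumes u: "u \<in> VB" "centre u" and star: "star P u = {{u, v1}, {u, v2}}"
    and v: "v1 \<noteq> v2" "v1 \<noteq> u" "v2 \<noteq> u"
    and z: "distinct [z1, phi u {u, v1}, a u, phi u {u, v2}, z2]"
      "{z1, phi u {u, v1}} \<in> edges (A u)" "{phi u {u, v2}, z2} \<in> edges (A u)"
    and F0: "F0 \<in> Gamma (del_verts (A u) {z1, phi u {u, v1}, a u, phi u {u, v2}, z2})"
  shows "Gamma (H u) \<noteq> {}"
proof -
  let ?y1 = "phi u {u, v1}" and ?y2 = "phi u {u, v2}"
  let ?X = "{z1, ?y1, a u, ?y2, z2}"
  let ?V0 = "Pair u ` (verts (A u) - ?X)" and ?F0 = "(`) (Pair u) ` F0"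
  let ?p1 = "(v1, phi v1 {u, v1})" and ?p2 = "(v2, phi v2 {u, v2})"
  let ?V1 = "{?p1, (u, ?y1), (u, z1)}" and ?F1 = "{{?p1, (u, ?y1)}, {(u, ?y1), (u, z1)}}"
  let ?V2 = "{?p2, (u, ?y2), (u, z2)}" and ?F2 = "{{?p2, (u, ?y2)}, {(u, ?y2), (u, z2)}}"
  have al: "al {u, v1} = {?p1, (u, ?y1)}" "al {u, v2} = {?p2, (u, ?y2)}"
    using alpha_doubleton[of phi u v1] alpha_doubleton[of phi u v2]
      by (simp_all add: insert_commute)
  have cov: "lambda_cover ((?V0 \<union> ?V1) \<union> ?V2) ((?F0 \<union> ?F1) \<union> ?F2)"
  proof (rule lambda_cover_Un[OF lambda_cover_Un[OF lifted_factor(1)[OF u(1) F0]]])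
    show "lambda_cover ?V1 ?F1" "lambda_cover ?V2 ?F2"
      by (rule lambda_cover_path; use z(1) v in auto)+
  qed (use lifted_factor(3)[OF u(1) F0] z(1) v in auto)
  have zV: "z1 \<in> verts (A u)" "z2 \<in> verts (A u)" "?y1 \<in> verts (A u)" "?y2 \<in> verts (A u)"
    using simple_edgesD[OF A_simple[OF u(1)] z(2)] simple_edgesD[OF A_simple[OF u(1)] z(3)]
    by (auto simp: doubleton_eq_iff)
  have "{u} \<times> (verts (A u) - {a u}) = ?V0 \<union> {(u, ?y1), (u, z1), (u, ?y2), (u, z2)}"
    using zV z(1) by auto
  then have "verts (H u) = (?V0 \<union> ?V1) \<union> ?V2"
    using H_centre[OF u(2)] star al by auto
  moreover have "(?F0 \<union> ?F1) \<union> ?F2 \<subseteq> edges (H u)"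
  proof -
    have sub: "{e \<in> edges (A u). e \<inter> ?X = {}} \<subseteq> {e \<in> edges (A u). e \<inter> {a u} = {}}" by blast
    have "{(u, ?y1), (u, z1)} = Pair u ` {?y1, z1}" "{(u, ?y2), (u, z2)} = Pair u ` {?y2, z2}"
      by auto
    then have "{(u, ?y1), (u, z1)} \<in> lift_edges u {e \<in> edges (A u). e \<inter> {a u} = {}}"
      "{(u, ?y2), (u, z2)} \<in> lift_edges u {e \<in> edges (A u). e \<inter> {a u} = {}}"
      using z by (auto simp: lift_edges_mem insert_commute)
    moreover have "?F0 \<subseteq> lift_edges u {e \<in> edges (A u). e \<inter> {a u} = {}}"
      using lifted_factor(2)[OF u(1) F0] lift_edges_mono[OF sub] by (rule subset_trans)
    moreover have "edges (H u) =
        lift_edges u {e \<in> edges (A u). e \<inter> {a u} = {}} \<union> {al {u, v1}, al {u, v2}}"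
      using H_centre[OF u(2)] star by simp
    ultimately show ?thesis unfolding al by blast
  qed
  ultimately have "lambda_factor (H u) ((?F0 \<union> ?F1) \<union> ?F2)"
    using lambda_factor_iff_cover[OF H_simple[OF u(1)]] cov by simp
  then show ?thesis by (auto simp: Gamma_def)
qed

text \<open>At a centre u, the 5-vertex path exists by 3-connectivity and (h3) supplies the factor
  of the remainder of A u.\<close>
lemma H_centre_factor:
  assumes u: "u \<in> VB" "centre u"
    and cub: "cubic (A u)" and kc: "k_connected 3 (A u)" and big: "card (verts (A u)) \<ge> 7"
    and h3: "property_h3 (A u) (a u)"
  shows "Gamma (H u) \<noteq> {}"
proof -
  obtain v1 v2 where star: "star P u = {{u, v1}, {u, v2}}" and v: "v1 \<noteq> v2" "v1 \<noteq> u" "v2 \<noteq> u"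
      and eB: "{u, v1} \<in> EB" "{u, v2} \<in> EB"
    using centre_star[OF u] by blast
  let ?y1 = "phi u {u, v1}" and ?y2 = "phi u {u, v2}"
  have yN: "?y1 \<in> N u" "?y2 \<in> N u" using phi_N eB by auto
  have "?y1 \<noteq> ?y2" using phi_inj[OF eB] v by (auto simp: doubleton_eq_iff)
  then obtain z1 z2 where z: "distinct [z1, ?y1, a u, ?y2, z2]" "{z1, ?y1} \<in> edges (A u)"
      "{?y2, z2} \<in> edges (A u)"
    using cubic_five_path[OF cub kc big yN] by blast
  have "{?y1, a u} \<in> edges (A u)" "{a u, ?y2} \<in> edges (A u)"
    using N_D[OF u(1) yN(1)] N_D[OF u(1) yN(2)] by (auto simp: insert_commute)
  then obtain F0 where "F0 \<in> Gamma (del_verts (A u) {z1, ?y1, a u, ?y2, z2})"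
    using h3 z unfolding property_h3_def by blast
  then show ?thesis using centre_piece_factor[OF u star v z] by blast
qed

end

text \<open>The order condition |V(A u)| = 2 mod 6 gives the counting condition modulo 3 and,
  together with 3-connectivity, at least 8 vertices.\<close>
lemma mod6_imp_mod3: "n mod 6 = 2 \<Longrightarrow> n mod 3 = (2::nat)"
  by presburger

lemma order_at_least_8:
  assumes "k_connected 3 H" "card (verts H) mod 6 = 2"
  shows "card (verts H) \<ge> 8"
proof -
  have "card (verts H) > 3" using assms(1) by (simp add: k_connected_def)
  then show ?thesis using assms(2) by presburger
qed

context base_factor begin

lemma GammaGP_nonempty:
  assumes A3: "\<And>u. u \<in> VB \<Longrightarrow> cubic (A u) \<and> k_connected 3 (A u)"
    and big: "\<And>u. u \<in> VB \<Longrightarrow> card (verts (A u)) \<ge> 7"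
    and h2: "\<And>u. u \<in> VB \<Longrightarrow> property_h2 (A u) (a u)"
    and h3: "\<And>u. u \<in> VB \<Longrightarrow> property_h3 (A u) (a u)"
  shows "GammaGP B A a phi P \<noteq> {}"
proof -
  have "Gamma (H u) \<noteq> {}" if u: "u \<in> VB" for u
    using H_end_factor[OF u _ h2[OF u]] H_centre_factor[OF u _ _ _ big[OF u] h3[OF u]] A3[OF u]
    by (cases "centre u") auto
  then have "(\<Pi>\<^sub>E u\<in>VB. Gamma (H u)) \<noteq> {}" by (simp add: PiE_eq_empty_iff)
  then obtain F where "F \<in> (\<Pi>\<^sub>E u\<in>VB. Gamma (H u))" by blast
  then show ?thesis using glue_GammaGP by blast
qed

end

theorem mainTheorem6:
  fixes B :: "'b graph" and A :: "'b \<Rightarrow> 'a graph" and a :: "'b \<Rightarrow> 'a"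
    and phi :: "'b \<Rightarrow> 'b set \<Rightarrow> 'a"
  assumes comp: "composition_data B A a phi"
    and B3: "cubic B" "k_connected 3 B"
    and A3: "\<And>u. u \<in> verts B \<Longrightarrow> cubic (A u) \<and> k_connected 3 (A u)"
    and amem: "\<And>u. u \<in> verts B \<Longrightarrow> a u \<in> verts (A u)"
    and mod6: "\<And>u. u \<in> verts B \<Longrightarrow> card (verts (A u)) mod 6 = 2"
    and h1: "\<And>u y. u \<in> verts B \<Longrightarrow> y \<in> verts (A u) - (nbrs (A u) (a u) \<union> {a u}) \<Longrightarrow>
               (\<exists>n\<in>nbrs (A u) (a u). adj (A u) y n) \<Longrightarrow>
               Gamma (del_verts (A u) (nbrs (A u) (a u) \<union> {a u, y})) = {}"
    and h2: "\<And>u z. u \<in> verts B \<Longrightarrow> {a u, z} \<in> edges (A u) \<Longrightarrow>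
               Gamma (del_verts (A u) {a u, z}) \<noteq> {}"
    and h3: "\<And>u x1 x2 x4 x5. u \<in> verts B \<Longrightarrow> distinct [x1, x2, a u, x4, x5] \<Longrightarrow>
               {x1, x2} \<in> edges (A u) \<Longrightarrow> {x2, a u} \<in> edges (A u) \<Longrightarrow>
               {a u, x4} \<in> edges (A u) \<Longrightarrow> {x4, x5} \<in> edges (A u) \<Longrightarrow>
               Gamma (del_verts (A u) {x1, x2, a u, x4, x5}) \<noteq> {}"
  shows "(\<forall>Q\<in>Gamma (compose B A a phi). \<exists>!P. P \<in> Gamma B \<and> Q \<in> GammaGP B A a phi P)
    \<and> (\<forall>P\<in>Gamma B.
         bij_betw (\<lambda>Q. \<lambda>u\<in>verts B.
                      restrict_factor (compose B A a phi) Q (Hgraph B A a phi P u))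
                  (GammaGP B A a phi P)
                  (\<Pi>\<^sub>E u\<in>verts B. Gamma (Hgraph B A a phi P u)))
    \<and> (Gamma (compose B A a phi) \<noteq> {} \<longleftrightarrow> Gamma B \<noteq> {})"
proof -
  interpret composition_mod3 B A a phi
    using comp mod6 mod6_imp_mod3 by unfold_locales (simp_all add: composition_mod3_axioms_def)
  have P1: "\<And>u. u \<in> VB \<Longrightarrow> property_h1 (A u) (a u)" using h1 by (auto simp: property_h1_def)
  have P2: "\<And>u. u \<in> VB \<Longrightarrow> property_h2 (A u) (a u)" using h2 by (auto simp: property_h2_def)
  have P3: "\<And>u. u \<in> VB \<Longrightarrow> property_h3 (A u) (a u)" using h3 by (auto simp: property_h3_def)
  have big: "\<And>u. u \<in> VB \<Longrightarrow> card (verts (A u)) \<ge> 7" using order_at_least_8 A3 mod6 by fastforce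
  have base: "\<And>P. P \<in> Gamma B \<Longrightarrow> base_factor B A a phi P"
    by (intro base_factor.intro composition_mod3_axioms) (simp add: base_factor_axioms_def)
  have gamma3: "\<forall>Q\<in>Gamma G. \<exists>!P. P \<in> Gamma B \<and> Q \<in> GammaGP B A a phi P"
    using unique_base_factor[OF P1] by blast
  moreover have "\<forall>P\<in>Gamma B. bij_betw (\<lambda>Q. \<lambda>u\<in>VB. restrict_factor G Q (Hgraph B A a phi P u))
      (GammaGP B A a phi P) (\<Pi>\<^sub>E u\<in>VB. Gamma (Hgraph B A a phi P u))"
    using base_factor.restriction_bij[OF base] by blast
  moreover have "Gamma G \<noteq> {} \<longleftrightarrow> Gamma B \<noteq> {}"
  proof
    show "Gamma G \<noteq> {} \<Longrightarrow> Gamma B \<noteq> {}" using gamma3 by blast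
    assume "Gamma B \<noteq> {}"
    then obtain P where "P \<in> Gamma B" by blast
    then obtain Q where "Q \<in> GammaGP B A a phi P"
      using base_factor.GammaGP_nonempty[OF base A3 big P2 P3] by blast
    then show "Gamma G \<noteq> {}" by (auto simp: GammaGP_def Gamma_def)
  qed
  ultimately show ?thesis by blast
qed

end
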